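(* (Betabar-derivative identity.) Let $F\in R$ be $k$-monic of $Y$-degree $N>0$ with $\mathrm{GCD}(F_Y,F-c)=1$ for all $c\in k$. Then $$\mathrm{int}(F_X,F_Y)=\mathrm{int}(F,F_Y)-N+1+\overline\beta(F),$$ where each term is an integer.
   Context: Let $k$ be an algebraically closed field of characteristic zero, $R=k((X))[Y]$, and $R^{\natural}$ the set of monic irreducible polynomials of positive degree in $Y$ over $k((X))$. Subscripts denote partial derivatives. For $H\in R$ let $n=\deg_Y H$ ($-\infty$ if $H=0$) and $H_0$ the coefficient of $Y^n$ ($0$ if $H=0$); $H$ is $k$-monic if $0\ne H_0\in k$. Write $H=H_0\prod_{j=1}^{\chi(H)}H_j$ with $H_j\in R^{\natural}$ (repetitions allowed). Intersection multiplicity: for nonzero $H,G\in R$ with $M=\deg_YG$, choose an integer $\nu>0$ divisible by all $\deg_Y H_j$ and write $H(X^\nu,Y)=H_0(X^\nu)\prod_{i=1}^n(Y-z_i(X))$, $z_i\in k((X))$; then $\mathrm{int}(H,G)=M\,\mathrm{ord}_XH_0+\frac1\nu\sum_i\mathrm{ord}_XG(X^\nu,z_i(X))$ ($\mathrm{ord}_X0=\infty$). If exactly one of $H,G$ is $0$, $\mathrm{int}(H,G)$ is $0$ if the other lies in $k((X))$ and $\infty$ otherwise; $\mathrm{int}(0,0)=\infty$. $\mathrm{GCD}(H,G)=1$ means $\mathrm{int}(H,G)\ne\infty$. For $\Phi\in R^{\natural}$, $\mathrm{res}(\Phi,G)$ is the unique $\lambda\in k$ with $\mathrm{int}(\Phi,G-\lambda)>0$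 if $\mathrm{int}(\Phi,G)\ge0$, and $\infty$ otherwise. For $\lambda\in k$: $\alpha_\lambda(H,G)=\{j:\mathrm{res}(H_j,G)=\lambda\}$, $\beta_\lambda(H,G)=\sum_{j\in\alpha_\lambda(H,G)}\mathrm{int}(H_j,G-\lambda)$, $\alpha(H,G)=\{\lambda\in k:\alpha_\lambda(H,G)\ne\emptyset\}$, $\beta(H,G)=\sum_{0\ne\lambda\in\alpha(H,G)}\beta_\lambda(H,G)$. The betabar invariant of $F$ is $\overline\beta(F)=\beta(F_Y,F)$. *)

theory Defs
  imports "HOL-Computational_Algebra.Computational_Algebra" "HOL-Library.Extended_Real"
begin

text \<open>R = k((X))[Y] is rendered as the type 'a fls poly (polynomials in Y over
  formal Laurent series in X with coefficients in k = 'a).\<close>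

definition ordX :: "'a::zero fls \<Rightarrow> ereal" where
  "ordX f = (if f = 0 then (\<infinity>::ereal) else ereal (of_int (fls_subdegree f)))"

definition subst_pow :: "nat \<Rightarrow> 'a::field fls poly \<Rightarrow> 'a fls poly" where
  "subst_pow \<nu> H = map_poly (\<lambda>c. fls_compose_power c \<nu>) H"

definition monic_irred :: "'a::field fls poly \<Rightarrow> bool" where
  "monic_irred P \<longleftrightarrow> lead_coeff P = 1 \<and> irreducible P \<and> degree P > 0"

definition intm :: "'a::field fls poly \<Rightarrow> 'a fls poly \<Rightarrow> ereal" where
  "intm H G =
    (if H = 0 \<and> G = 0 then (\<infinity>::ereal)
     else if H = 0 then (if degree G = 0 then 0 else (\<infinity>::ereal))
     else if G = 0 then (if degree H = 0 then 0 else (\<infinity>::ereal))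
     else (SOME v. \<exists>\<nu> zs. \<nu> > 0 \<and>
              (\<forall>P. monic_irred P \<and> P dvd H \<longrightarrow> degree P dvd \<nu>) \<and>
              length zs = degree H \<and>
              subst_pow \<nu> H = smult (fls_compose_power (lead_coeff H) \<nu>) (\<Prod>z\<leftarrow>zs. [:- z, 1:]) \<and>
              v = ereal (real (degree G)) * ordX (lead_coeff H)
                  + ereal (1 / real \<nu>) * (\<Sum>z\<leftarrow>zs. ordX (poly (subst_pow \<nu> G) z))))"

text \<open>Residue res(Phi,G): Some lambda, or None standing for infinity.\<close>
definition res :: "'a::field fls poly \<Rightarrow> 'a fls poly \<Rightarrow> 'a option" where
  "res \<Phi> G = (if intm \<Phi> G \<ge> 0
                then Some (THE l. intm \<Phi> (G - [:fls_const l:]) > 0) else None)"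

definition factors :: "'a::field fls poly \<Rightarrow> 'a fls poly multiset" where
  "factors H = (SOME Hs. (\<forall>P\<in>#Hs. monic_irred P) \<and> H = smult (lead_coeff H) (prod_mset Hs))"

definition alpha_lam :: "'a \<Rightarrow> 'a::field fls poly \<Rightarrow> 'a fls poly \<Rightarrow> 'a fls poly multiset" where
  "alpha_lam l H G = filter_mset (\<lambda>P. res P G = Some l) (factors H)"

definition beta_lam :: "'a \<Rightarrow> 'a::field fls poly \<Rightarrow> 'a fls poly \<Rightarrow> ereal" where
  "beta_lam l H G = sum_mset (image_mset (\<lambda>P. intm P (G - [:fls_const l:])) (alpha_lam l H G))"

definition alpha :: "'a::field fls poly \<Rightarrow> 'a fls poly \<Rightarrow> 'a set" where
  "alpha H G = {l. alpha_lam l H G \<noteq> {#}}"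

definition beta :: "'a::field fls poly \<Rightarrow> 'a fls poly \<Rightarrow> ereal" where
  "beta H G = (\<Sum>l\<in>alpha H G - {0}. beta_lam l H G)"

definition betabar :: "'a::field fls poly \<Rightarrow> ereal" where
  "betabar F = beta (pderiv F) F"

end

theory Submission
  imports Defs
begin

text \<open>
  By Newton--Puiseux (obtained here from Hensel's lemma) there is a \<open>\<nu>\<close> such that \<open>F\<close>, \<open>F\<^sub>X\<close>
  and all irreducible factors of \<open>F\<^sub>Y\<close> split into linear factors once \<open>X\<close> is replaced by
  \<open>X\<^sup>\<nu>\<close>. Then \<open>\<nu> int(H, G)\<close> is, up to the leading coefficient of \<open>H\<close>, the sum of
  \<open>ord G(X\<^sup>\<nu>, w)\<close> over the roots \<open>w\<close> of \<open>H(X\<^sup>\<nu>, Y)\<close>, and \<open>int\<close> is symmetric.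

  Let \<open>w\<close> range over the \<open>N - 1\<close> roots of \<open>F\<^sub>Y(X\<^sup>\<nu>, Y)\<close> and let \<open>f = F(X\<^sup>\<nu>, w)\<close>, with
  constant term \<open>f\<^sub>0\<close>; \<open>f\<close> is not constant because \<open>GCD(F\<^sub>Y, F - c) = 1\<close>. Since
  \<open>F\<^sub>Y(X\<^sup>\<nu>, w) = 0\<close>, the chain rule gives \<open>d f / d X = \<nu> X\<^sup>\<nu>\<^sup>-\<^sup>1 F\<^sub>X(X\<^sup>\<nu>, w)\<close>, so
  \<open>ord F\<^sub>X(X\<^sup>\<nu>, w) = ord (f - f\<^sub>0) - \<nu>\<close>. Now \<open>ord (f - f\<^sub>0) = ord f\<close> unless \<open>ord f = 0\<close>, and the
  roots with \<open>ord f = 0\<close> are exactly those of the factors of \<open>F\<^sub>Y\<close> with nonzero residue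
  \<open>f\<^sub>0\<close>; for these, \<open>ord (f - f\<^sub>0)\<close> is the contribution to \<open>\<beta>\<close>, because the substitutions
  \<open>X \<mapsto> \<zeta> X\<close> with \<open>\<zeta>\<^sup>\<nu> = 1\<close> permute the roots of an irreducible factor transitively.
  Summing over \<open>w\<close> gives \<open>\<nu>\<close> times the identity; the same symmetry shows that each of the
  sums is divisible by \<open>\<nu>\<close>.
\<close>

unbundle fps_syntax

subsection \<open>Substitutions in Laurent series\<close>

locale idom_hom =
  fixes f :: "'a::idom \<Rightarrow> 'b::idom"
  assumes hom_add: "f (x + y) = f x + f y"
    and hom_mult: "f (x * y) = f x * f y"
    and hom_one: "f 1 = 1"
begin

lemma hom_zero [simp]: "f 0 = 0"
  using hom_add[of 0 0] add_left_imp_eq[of "f 0" "f 0" 0] by simp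

lemma hom_uminus: "f (- x) = - f x"
  using hom_add[of x "- x"] by (simp add: eq_neg_iff_add_eq_0 add.commute)

lemma hom_diff: "f (x - y) = f x - f y"
  using hom_add[of x "- y"] by (simp add: hom_uminus)

lemma hom_of_nat: "f (of_nat n) = of_nat n"
  by (induction n) (simp_all add: hom_add hom_one)

lemma hom_prod_mset: "f (\<Prod>x\<in>#A. g x) = (\<Prod>x\<in>#A. f (g x))"
  by (induction A) (simp_all add: hom_mult hom_one)

lemma map_poly_add: "map_poly f (p + q) = map_poly f p + map_poly f q"
  by (rule poly_eqI) (simp add: coeff_map_poly hom_add)

lemma map_poly_diff: "map_poly f (p - q) = map_poly f p - map_poly f q"
  by (rule poly_eqI) (simp add: coeff_map_poly hom_diff)

lemma map_poly_smult: "map_poly f (smult c p) = smult (f c) (map_poly f p)"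
  by (rule poly_eqI) (simp add: coeff_map_poly hom_mult)

lemma map_poly_const: "map_poly f [:c:] = [:f c:]"
  by (simp add: map_poly_pCons)

lemma map_poly_mult: "map_poly f (p * q) = map_poly f p * map_poly f q"
  by (induction p) (simp_all add: map_poly_pCons map_poly_add map_poly_smult)

lemma map_poly_prod_mset: "map_poly f (\<Prod>x\<in>#A. g x) = (\<Prod>x\<in>#A. map_poly f (g x))"
  by (induction A) (simp_all add: map_poly_mult hom_one)

lemma map_poly_prod: "map_poly f (\<Prod>x\<in>A. g x) = (\<Prod>x\<in>A. map_poly f (g x))"
  by (induction A rule: infinite_finite_induct) (simp_all add: map_poly_mult hom_one)

lemma map_poly_linear: "map_poly f [:- z, 1:] = [:- f z, 1:]"
  by (simp add: map_poly_pCons hom_uminus hom_one)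

lemma map_poly_dvd: "p dvd q \<Longrightarrow> map_poly f p dvd map_poly f q"
  by (auto simp: map_poly_mult elim!: dvdE)

lemma poly_map_poly_hom: "poly (map_poly f p) (f x) = f (poly p x)"
  by (induction p) (simp_all add: map_poly_pCons hom_add hom_mult)

lemma map_poly_pcompose: "map_poly f (pcompose p q) = pcompose (map_poly f p) (map_poly f q)"
  by (induction p) (simp_all add: map_poly_pCons pcompose_pCons map_poly_add map_poly_mult map_poly_const)

lemma map_poly_pderiv: "map_poly f (pderiv p) = pderiv (map_poly f p)"
  by (rule poly_eqI) (simp add: coeff_map_poly coeff_pderiv hom_mult hom_of_nat hom_add hom_one)

end

lemma idom_hom_fps_to_fls: "idom_hom (fps_to_fls :: 'a::field fps \<Rightarrow> 'a fls)"
  by unfold_locales (simp_all add: fls_times_fps_to_fls)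

lemma idom_hom_fls_compose_power: "0 < \<nu> \<Longrightarrow> idom_hom (\<lambda>c::'a::field fls. fls_compose_power c \<nu>)"
  by unfold_locales auto

lemma fls_compose_power_1 [simp]: "fls_compose_power f (Suc 0) = f"
  by (rule fls_eqI) (simp add: fls_nth_compose_power)

lemma fls_compose_power_compose_power:
  assumes "0 < a" "0 < b"
  shows "fls_compose_power (fls_compose_power f a) b = fls_compose_power f (a * b)"
proof (rule fls_eqI)
  fix n :: int
  have "int b dvd n \<and> int a dvd n div int b \<longleftrightarrow> int (a * b) dvd n"
    using assms by (auto simp: mult.commute elim!: dvdE)
  moreover have "n div int b div int a = n div int (a * b)"
    by (metis zdiv_zmult2_eq of_nat_0_le_iff of_nat_mult mult.commute)
  ultimately show "fls_compose_power (fls_compose_power f a) b $$ n = fls_compose_power f (a * b) $$ n"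
    using assms by (auto simp: fls_nth_compose_power)
qed

lemma fls_compose_power_eq_0_iff: "0 < \<nu> \<Longrightarrow> fls_compose_power f \<nu> = 0 \<longleftrightarrow> f = 0"
proof
  assume nu: "0 < \<nu>" and "fls_compose_power f \<nu> = 0"
  then have "f $$ n = 0" for n
    using fls_nth_compose_power[OF nu, of f "int \<nu> * n"] nu by simp
  then show "f = 0" by (simp add: fls_eqI)
qed simp

lemma fls_subdegree_compose_power:
  assumes "0 < \<nu>"
  shows "fls_subdegree (fls_compose_power f \<nu>) = int \<nu> * fls_subdegree f"
proof (cases "f = 0")
  case False
  show ?thesis
  proof (rule fls_subdegree_eqI)
    show "fls_compose_power f \<nu> $$ (int \<nu> * fls_subdegree f) \<noteq> 0"
      using assms False by (simp add: fls_nth_compose_power)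
    fix k assume k: "k < int \<nu> * fls_subdegree f"
    show "fls_compose_power f \<nu> $$ k = 0"
    proof (cases "int \<nu> dvd k")
      case True
      then obtain j where j: "k = int \<nu> * j" by (elim dvdE)
      with k assms have "j < fls_subdegree f" by simp
      then show ?thesis using assms j by (simp add: fls_nth_compose_power fls_eq0_below_subdegree)
    qed (use assms in \<open>simp add: fls_nth_compose_power\<close>)
  qed
qed simp

lemma coeff_subst_pow: "coeff (subst_pow \<nu> p) n = fls_compose_power (coeff p n) \<nu>"
  by (simp add: subst_pow_def coeff_map_poly)

lemma subst_pow_1 [simp]: "subst_pow (Suc 0) p = p"
  by (simp add: subst_pow_def)

lemma subst_pow_0_right [simp]: "subst_pow \<nu> 0 = 0"
  by (simp add: subst_pow_def)

lemma subst_pow_subst_pow: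
  "0 < a \<Longrightarrow> 0 < b \<Longrightarrow> subst_pow b (subst_pow a p) = subst_pow (a * b) p"
  by (simp add: subst_pow_def map_poly_map_poly o_def fls_compose_power_compose_power)

lemma degree_subst_pow: "0 < \<nu> \<Longrightarrow> degree (subst_pow \<nu> p) = degree p"
  by (simp add: subst_pow_def degree_map_poly fls_compose_power_eq_0_iff)

lemma lead_coeff_subst_pow:
  "0 < \<nu> \<Longrightarrow> lead_coeff (subst_pow \<nu> p) = fls_compose_power (lead_coeff p) \<nu>"
  by (simp add: degree_subst_pow coeff_subst_pow)

lemma subst_pow_eq_0_iff: "0 < \<nu> \<Longrightarrow> subst_pow \<nu> p = 0 \<longleftrightarrow> p = 0"
  by (metis fls_compose_power_eq_0_iff lead_coeff_subst_pow leading_coeff_0_iff)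

context
  fixes \<nu> :: nat
  assumes nu: "0 < \<nu>"
begin

interpretation compose_power: idom_hom "\<lambda>c::'a::field fls. fls_compose_power c \<nu>"
  by (rule idom_hom_fls_compose_power[OF nu])

lemma subst_pow_mult: "subst_pow \<nu> (p * q :: 'a::field fls poly) = subst_pow \<nu> p * subst_pow \<nu> q"
  unfolding subst_pow_def by (rule compose_power.map_poly_mult)

lemma subst_pow_add: "subst_pow \<nu> (p + q :: 'a::field fls poly) = subst_pow \<nu> p + subst_pow \<nu> q"
  unfolding subst_pow_def by (rule compose_power.map_poly_add)

lemma subst_pow_diff: "subst_pow \<nu> (p - q :: 'a::field fls poly) = subst_pow \<nu> p - subst_pow \<nu> q"
  unfolding subst_pow_def by (rule compose_power.map_poly_diff)

lemma subst_pow_smult: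
  "subst_pow \<nu> (smult c p :: 'a::field fls poly) = smult (fls_compose_power c \<nu>) (subst_pow \<nu> p)"
  unfolding subst_pow_def by (rule compose_power.map_poly_smult)

lemma subst_pow_pCons:
  "subst_pow \<nu> (pCons c p :: 'a::field fls poly) = pCons (fls_compose_power c \<nu>) (subst_pow \<nu> p)"
  unfolding subst_pow_def by (rule map_poly_pCons) simp

lemma subst_pow_const: "subst_pow \<nu> [:c::'a::field fls:] = [:fls_compose_power c \<nu>:]"
  unfolding subst_pow_def by (rule compose_power.map_poly_const)

lemma subst_pow_one: "subst_pow \<nu> (1::'a::field fls poly) = 1"
  unfolding subst_pow_def using nu by simp

lemma subst_pow_linear: "subst_pow \<nu> [:- z, 1::'a::field fls:] = [:- fls_compose_power z \<nu>, 1:]"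
  unfolding subst_pow_def by (rule compose_power.map_poly_linear)

lemma subst_pow_prod_mset:
  "subst_pow \<nu> (\<Prod>x\<in>#A. g x :: 'a::field fls poly) = (\<Prod>x\<in>#A. subst_pow \<nu> (g x))"
  unfolding subst_pow_def by (rule compose_power.map_poly_prod_mset)

lemma subst_pow_pcompose:
  "subst_pow \<nu> (pcompose p q :: 'a::field fls poly) = pcompose (subst_pow \<nu> p) (subst_pow \<nu> q)"
  unfolding subst_pow_def by (rule compose_power.map_poly_pcompose)

lemma subst_pow_pderiv: "subst_pow \<nu> (pderiv p :: 'a::field fls poly) = pderiv (subst_pow \<nu> p)"
  unfolding subst_pow_def by (rule compose_power.map_poly_pderiv)

lemma subst_pow_dvd: "p dvd q \<Longrightarrow> subst_pow \<nu> (p :: 'a::field fls poly) dvd subst_pow \<nu> q"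
  unfolding subst_pow_def by (rule compose_power.map_poly_dvd)

lemma poly_subst_pow_compose_power:
  "poly (subst_pow \<nu> p) (fls_compose_power x \<nu>) = fls_compose_power (poly p x :: 'a::field fls) \<nu>"
  unfolding subst_pow_def by (rule compose_power.poly_map_poly_hom)

end

definition fls_rescale :: "'a::field \<Rightarrow> 'a fls \<Rightarrow> 'a fls" where
  "fls_rescale \<zeta> f = fls_compose_fps f (fps_const \<zeta> * fps_X)"

lemma fls_nth_rescale: "\<zeta> \<noteq> 0 \<Longrightarrow> fls_rescale \<zeta> f $$ n = f $$ n * \<zeta> powi n"
  by (simp add: fls_rescale_def fls_nth_fls_compose_fps_linear)

lemma idom_hom_fls_rescale: "\<zeta> \<noteq> 0 \<Longrightarrow> idom_hom (fls_rescale \<zeta>)"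
  by unfold_locales (simp_all add: fls_rescale_def fls_compose_fps_add fls_compose_fps_mult)

lemma fls_rescale_rescale:
  "\<zeta> \<noteq> 0 \<Longrightarrow> \<xi> \<noteq> 0 \<Longrightarrow> fls_rescale \<xi> (fls_rescale \<zeta> f) = fls_rescale (\<xi> * \<zeta>) f"
  by (rule fls_eqI) (simp add: fls_nth_rescale power_int_mult_distrib mult_ac)

lemma fls_rescale_1 [simp]: "fls_rescale 1 f = f"
  by (rule fls_eqI) (simp add: fls_nth_rescale)

lemma fls_rescale_const [simp]: "fls_rescale \<zeta> (fls_const c) = fls_const c"
  by (simp add: fls_rescale_def)

lemma fls_subdegree_rescale: "\<zeta> \<noteq> 0 \<Longrightarrow> fls_subdegree (fls_rescale \<zeta> f) = fls_subdegree f"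
  by (simp add: fls_rescale_def)

lemma fls_rescale_eq_0_iff: "\<zeta> \<noteq> 0 \<Longrightarrow> fls_rescale \<zeta> f = 0 \<longleftrightarrow> f = 0"
  by (simp add: fls_rescale_def fls_compose_fps_eq_0_iff)

lemma root_of_unity_nonzero: "\<zeta> ^ \<nu> = (1::'a::field) \<Longrightarrow> 0 < \<nu> \<Longrightarrow> \<zeta> \<noteq> 0"
  by (metis power_0_left zero_neq_one not_gr0)

lemma fls_rescale_compose_power:
  assumes "\<zeta> ^ \<nu> = 1" "0 < \<nu>"
  shows "fls_rescale \<zeta> (fls_compose_power f \<nu>) = fls_compose_power f \<nu>"
proof (rule fls_eqI)
  fix n :: int
  have z: "\<zeta> \<noteq> 0" using assms by (rule root_of_unity_nonzero)
  show "fls_rescale \<zeta> (fls_compose_power f \<nu>) $$ n = fls_compose_power f \<nu> $$ n"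
  proof (cases "int \<nu> dvd n")
    case True
    then obtain k where k: "n = int \<nu> * k" by (elim dvdE)
    have "\<zeta> powi n = (\<zeta> powi int \<nu>) powi k" by (simp add: k power_int_mult)
    also have "\<zeta> powi int \<nu> = 1" using assms by (simp add: power_int_of_nat)
    finally show ?thesis using z by (simp add: fls_nth_rescale)
  qed (use assms z in \<open>simp add: fls_nth_rescale fls_nth_compose_power\<close>)
qed

lemma map_poly_rescale_subst_pow:
  assumes "\<zeta> ^ \<nu> = 1" "0 < \<nu>"
  shows "map_poly (fls_rescale \<zeta>) (subst_pow \<nu> H) = subst_pow \<nu> H"
  using assms root_of_unity_nonzero[OF assms]
  by (intro poly_eqI) (simp add: coeff_map_poly fls_rescale_eq_0_iff coeff_subst_pow fls_rescale_compose_power)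

subsection \<open>Algebraically closed fields and roots of unity\<close>

definition algebraically_closed :: "'a::field itself \<Rightarrow> bool" where
  "algebraically_closed _ \<longleftrightarrow> (\<forall>p::'a poly. degree p > 0 \<longrightarrow> (\<exists>x. poly p x = 0))"

lemma algebraically_closed_split:
  fixes p :: "'a::field poly"
  assumes ac: "algebraically_closed TYPE('a)" and "p \<noteq> 0"
  shows "\<exists>A. size A = degree p \<and> p = smult (lead_coeff p) (\<Prod>x\<in>#A. [:- x, 1:])"
  using assms(2)
proof (induction "degree p" arbitrary: p rule: less_induct)
  case (less p)
  show ?case
  proof (cases "degree p = 0")
    case True
    then show ?thesis by (intro exI[of _ "{#}"]) (auto elim!: degree_eq_zeroE)
  next
    case False
    then obtain x where "poly p x = 0"
      using ac unfolding algebraically_closed_def by blast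
    then obtain q where p_eq: "p = [:- x, 1:] * q"
      by (auto simp: poly_eq_0_iff_dvd elim!: dvdE)
    have "q \<noteq> 0"
      using less.prems p_eq by auto
    moreover from this have deg: "degree p = Suc (degree q)"
      unfolding p_eq by (subst degree_mult_eq) auto
    ultimately obtain A where A: "size A = degree q" "q = smult (lead_coeff q) (\<Prod>x\<in>#A. [:- x, 1:])"
      using less.hyps[of q] by auto
    have "smult (lead_coeff p) (\<Prod>y\<in>#add_mset x A. [:- y, 1:]) =
          [:- x, 1:] * smult (lead_coeff q) (\<Prod>y\<in>#A. [:- y, 1:])"
      unfolding p_eq lead_coeff_mult by simp
    also note A(2) [symmetric]
    also note p_eq [symmetric]
    finally show ?thesis using A(1) deg by (intro exI[of _ "add_mset x A"]) auto
  qed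
qed

lemma proots_prod_linear: "proots (\<Prod>x\<in>#A. [:- x, 1:]) = (A::'a::idom multiset)"
proof (induction A)
  case (add x A)
  have "proots (\<Prod>y\<in>#add_mset x A. [:- y, 1:]) = proots ([:- x, 1:] * (\<Prod>y\<in>#A. [:- y, 1:]))"
    by simp
  also have "\<dots> = proots [:- x, 1:] + proots (\<Prod>y\<in>#A. [:- y, 1:])"
    by (rule proots_mult) (auto simp: prod_mset_zero_iff)
  also have "proots [:- x, 1:] = {#x#}" using proots_linear_factor[of "- x"] by simp
  finally show ?case using add.IH by simp
qed simp

lemma smult_prod_linear_eqD:
  fixes a b :: "'a::idom"
  assumes "smult a (\<Prod>x\<in>#A. [:- x, 1:]) = smult b (\<Prod>x\<in>#B. [:- x, 1:])" "a \<noteq> 0" "b \<noteq> 0"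
  shows "A = B"
  using arg_cong[OF assms(1), of proots] assms(2,3) by (simp add: proots_prod_linear)

lemma degree_prod_linear: "degree (\<Prod>x\<in>#A. [:- x, (1::'a::idom):]) = size A"
proof (induction A)
  case (add x A)
  have "(\<Prod>x\<in>#A. [:- x, (1::'a):]) \<noteq> 0" by (auto simp: prod_mset_zero_iff)
  then have "degree ([:- x, 1:] * (\<Prod>x\<in>#A. [:- x, (1::'a):])) = Suc (size A)"
    using add by (subst degree_mult_eq) auto
  then show ?case by simp
qed simp

lemma finite_roots_of_unity: "0 < \<nu> \<Longrightarrow> finite {\<zeta>::'a::field. \<zeta> ^ \<nu> = 1}"
proof -
  assume nu: "0 < \<nu>"
  have "monom (1::'a) \<nu> + [:- 1:] \<noteq> 0"
    using nu by (metis add.right_neutral coeff_add coeff_monom coeff_pCons_Suc gr0_implies_Suc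
        one_neq_zero coeff_0)
  then have "finite {x. poly (monom (1::'a) \<nu> + [:- 1:]) x = 0}" by (rule poly_roots_finite)
  then show ?thesis by (simp add: poly_monom)
qed

lemma card_roots_of_unity_ge:
  assumes ac: "algebraically_closed TYPE('a::field_char_0)" and nu: "0 < \<nu>"
  shows "\<nu> \<le> card {x::'a. x ^ \<nu> = 1}"
proof -
  define p :: "'a poly" where "p = monom 1 \<nu> + [:- 1:]"
  have poly_p: "poly p x = x ^ \<nu> - 1" for x by (simp add: p_def poly_monom)
  have "coeff [:- 1::'a:] \<nu> = 0" using nu by (cases \<nu>) auto
  then have deg_p: "degree p = \<nu>" and lead_p: "lead_coeff p = 1"
    unfolding p_def using nu by (subst degree_add_eq_left; simp add: degree_monom_eq)+
  have p0: "p \<noteq> 0" using deg_p nu by auto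
  obtain A where A: "size A = \<nu>" "p = (\<Prod>x\<in>#A. [:- x, 1:])"
    using algebraically_closed_split[OF ac p0] deg_p lead_p by auto
  have roots_p: "proots p = A" using A(2) by (simp add: proots_prod_linear)
  have "pderiv p = monom (of_nat \<nu>) (\<nu> - 1)" by (simp add: p_def pderiv_add pderiv_monom)
  then have "rsquarefree p"
    using nu by (auto simp: rsquarefree_roots poly_p poly_monom dest: root_of_unity_nonzero)
  then have "count A x \<le> 1" for x
    using p0 by (simp add: roots_p[symmetric] rsquarefree_def) (metis le_refl le_SucI le0)
  then have "size A = card (set_mset A)"
    by (metis size_mset_set count_mset_set(1,3) finite_set_mset le_Suc_eq le_zero_eq
        count_eq_zero_iff One_nat_def multiset_eqI)
  moreover have "set_mset A = {x. x ^ \<nu> = 1}"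
    using p0 by (simp add: roots_p[symmetric] poly_p)
  ultimately show ?thesis using A(1) by simp
qed

text \<open>The \<open>\<nu>\<close> distinct \<open>\<nu>\<close>-th roots of unity are too many to all be roots of \<open>Y\<^sup>r - 1\<close>,
  where \<open>r = n mod \<nu>\<close>.\<close>
lemma root_of_unity_powi_ne_1:
  fixes \<nu> :: nat and n :: int
  assumes ac: "algebraically_closed TYPE('a::field_char_0)" and nu: "0 < \<nu>" and nd: "\<not> int \<nu> dvd n"
  obtains \<zeta> :: "'a::field_char_0" where "\<zeta> ^ \<nu> = 1" "\<zeta> powi n \<noteq> 1"
proof -
  have "\<exists>\<zeta>::'a. \<zeta> ^ \<nu> = 1 \<and> \<zeta> powi n \<noteq> 1"
  proof (rule ccontr)
    assume all_1: "\<not> ?thesis"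
    define r where "r = nat (n mod int \<nu>)"
    have "0 \<le> n mod int \<nu>" "n mod int \<nu> < int \<nu>" "n mod int \<nu> \<noteq> 0"
      using nu nd by (simp_all add: dvd_eq_mod_eq_0)
    then have r: "0 < r" "r < \<nu>" "n = int \<nu> * (n div int \<nu>) + int r"
      by (simp_all add: r_def)
    define q :: "'a poly" where "q = monom 1 r + [:- 1:]"
    have "\<zeta> ^ r = 1" if z: "\<zeta> ^ \<nu> = 1" for \<zeta> :: 'a
    proof -
      have "\<zeta> powi n = (\<zeta> powi int \<nu>) powi (n div int \<nu>) * \<zeta> powi int r"
        using r(3) root_of_unity_nonzero[OF z nu] by (metis power_int_add power_int_mult)
      also have "\<dots> = \<zeta> ^ r" using z by (simp add: power_int_of_nat)
      finally show ?thesis using all_1 z by auto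
    qed
    then have sub: "{x::'a. x ^ \<nu> = 1} \<subseteq> {x. poly q x = 0}"
      by (auto simp: q_def poly_monom)
    have deg_q: "degree q = r"
      unfolding q_def using r by (subst degree_add_eq_left) (simp_all add: degree_monom_eq)
    then have q0: "q \<noteq> 0" using r by auto
    have "card {x::'a. x ^ \<nu> = 1} \<le> card {x. poly q x = 0}"
      by (rule card_mono[OF poly_roots_finite[OF q0] sub])
    also have "\<dots> \<le> r" using card_poly_roots_bound[OF q0] deg_q by simp
    finally show False using card_roots_of_unity_ge[OF ac nu] r by simp
  qed
  then show ?thesis using that by blast
qed

definition fls_uncompose_power :: "nat \<Rightarrow> 'a::field fls \<Rightarrow> 'a fls" where
  "fls_uncompose_power \<nu> f = Abs_fls (\<lambda>m. f $$ (int \<nu> * m))"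

lemma fls_nth_uncompose_power:
  assumes "0 < \<nu>"
  shows "fls_uncompose_power \<nu> f $$ m = f $$ (int \<nu> * m)"
proof -
  obtain N where N: "\<forall>k<N. f $$ k = 0" by (elim fls_nth_vanishes_belowE)
  have "{n::nat. f $$ (int \<nu> * - int n) \<noteq> 0} \<subseteq> {..nat \<bar>N\<bar>}"
  proof
    fix n assume "n \<in> {n::nat. f $$ (int \<nu> * - int n) \<noteq> 0}"
    then have "\<not> int \<nu> * - int n < N" using N by auto
    moreover have "1 * int n \<le> int \<nu> * int n" by (rule mult_right_mono) (use assms in auto)
    ultimately show "n \<in> {..nat \<bar>N\<bar>}" by auto
  qed
  then have "\<forall>\<^sub>\<infinity>n. f $$ (int \<nu> * - int n) = 0"
    by (auto simp: eventually_cofinite intro: finite_subset)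
  then show ?thesis unfolding fls_uncompose_power_def by (subst nth_Abs_fls) auto
qed

lemma fls_uncompose_power_0 [simp]: "0 < \<nu> \<Longrightarrow> fls_uncompose_power \<nu> 0 = 0"
  by (rule fls_eqI) (simp add: fls_nth_uncompose_power)

lemma rescale_invariant_imp_compose_power:
  fixes f :: "'a::field_char_0 fls"
  assumes ac: "algebraically_closed TYPE('a)" and nu: "0 < \<nu>"
    and inv: "\<And>\<zeta>. \<zeta> ^ \<nu> = 1 \<Longrightarrow> fls_rescale \<zeta> f = f"
  shows "fls_compose_power (fls_uncompose_power \<nu> f) \<nu> = f"
proof (rule fls_eqI)
  fix n :: int
  show "fls_compose_power (fls_uncompose_power \<nu> f) \<nu> $$ n = f $$ n"
  proof (cases "int \<nu> dvd n")
    case True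
    then show ?thesis using nu by (simp add: fls_nth_compose_power fls_nth_uncompose_power)
  next
    case False
    obtain \<zeta> :: 'a where z: "\<zeta> ^ \<nu> = 1" "\<zeta> powi n \<noteq> 1"
      using root_of_unity_powi_ne_1[OF ac nu False] by blast
    have "f $$ n * \<zeta> powi n = f $$ n"
      using inv[OF z(1)] fls_nth_rescale[OF root_of_unity_nonzero[OF z(1) nu], of f n] by simp
    then have "f $$ n = 0" using z(2) by (metis mult.right_neutral mult_left_cancel)
    then show ?thesis using nu False by (simp add: fls_nth_compose_power)
  qed
qed

lemma rescale_invariant_imp_dvd_subdegree:
  fixes f :: "'a::field_char_0 fls"
  assumes ac: "algebraically_closed TYPE('a)" and nu: "0 < \<nu>"
    and inv: "\<And>\<zeta>. \<zeta> ^ \<nu> = 1 \<Longrightarrow> fls_rescale \<zeta> f = f"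
  shows "int \<nu> dvd fls_subdegree f"
  using fls_subdegree_compose_power[OF nu, of "fls_uncompose_power \<nu> f"]
    rescale_invariant_imp_compose_power[OF ac nu inv] by simp

subsection \<open>Factorisation and Hensel lifting\<close>

lemma poly_bezout_gcd:
  fixes f g :: "'a::field poly"
  assumes "f \<noteq> 0"
  obtains a b where "a * f + b * g \<noteq> 0" "(a * f + b * g) dvd f" "(a * f + b * g) dvd g"
proof -
  define S where "S = {n. \<exists>a b. a * f + b * g \<noteq> 0 \<and> degree (a * f + b * g) = n}"
  have "degree f \<in> S" unfolding S_def using assms by (intro CollectI exI[of _ 1] exI[of _ 0]) simp
  then have "(LEAST n. n \<in> S) \<in> S" by (rule LeastI)
  then obtain a b where d: "a * f + b * g \<noteq> 0" "degree (a * f + b * g) = (LEAST n. n \<in> S)"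
    unfolding S_def by blast
  define d where "d = a * f + b * g"
  text \<open>A combination of least degree divides every combination, since its remainder is one.\<close>
  have dvd_comb: "d dvd a' * f + b' * g" for a' b'
  proof (rule ccontr)
    define x where "x = a' * f + b' * g"
    assume "\<not> d dvd a' * f + b' * g"
    then have m0: "x mod d \<noteq> 0" by (simp add: x_def mod_eq_0_iff_dvd)
    have "x mod d = x - x div d * d" by (simp add: minus_div_mult_eq_mod)
    also have "\<dots> = (a' - x div d * a) * f + (b' - x div d * b) * g"
      by (simp add: x_def d_def algebra_simps)
    finally have "x mod d = (a' - x div d * a) * f + (b' - x div d * b) * g" .
    then have "degree (x mod d) \<in> S" unfolding S_def using m0 by auto
    then have "(LEAST n. n \<in> S) \<le> degree (x mod d)" by (rule Least_le)
    moreover have "degree (x mod d) < degree d" using degree_mod_less'[of d x] d m0 by (simp add: d_def)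
    ultimately show False using d by (simp add: d_def)
  qed
  show ?thesis
    using that d(1) dvd_comb[of 1 0] dvd_comb[of 0 1] by (simp add: d_def)
qed

lemma poly_bezout_one:
  fixes f g :: "'a::field poly"
  assumes "f \<noteq> 0" and const: "\<And>d. d dvd f \<Longrightarrow> d dvd g \<Longrightarrow> d \<noteq> 0 \<Longrightarrow> degree d = 0"
  obtains s t where "s * f + t * g = 1"
proof -
  obtain a b where ab: "a * f + b * g \<noteq> 0" "(a * f + b * g) dvd f" "(a * f + b * g) dvd g"
    using poly_bezout_gcd[OF assms(1)] .
  then obtain c where c: "a * f + b * g = [:c:]" "c \<noteq> 0"
    using const by (metis degree_eq_zeroE pCons_0_0)
  have "smult (inverse c) a * f + smult (inverse c) b * g = smult (inverse c) [:c:]"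
    by (simp add: c(1)[symmetric] smult_add_right)
  also have "\<dots> = 1" using c(2) by (simp add: one_pCons)
  finally show ?thesis by (rule that)
qed

lemma irreducible_bezout_one:
  fixes P Q :: "'a::field poly"
  assumes "irreducible P" "\<not> P dvd Q"
  obtains s t where "s * P + t * Q = 1"
proof (rule poly_bezout_one)
  show "P \<noteq> 0" using assms(1) by auto
  fix d assume d: "d dvd P" "d dvd Q" "d \<noteq> 0"
  then obtain k where k: "P = d * k" by (elim dvdE)
  then have "is_unit d \<or> is_unit k" using assms(1) by (simp add: irreducible_def)
  moreover have "\<not> is_unit k"
    using k d(2) assms(2) by (metis dvd_mult_unit_iff dvd_refl dvd_trans)
  ultimately show "degree d = 0" using d(3) by (simp add: is_unit_iff_degree)
qed (rule that)

lemma monic_irred_factorization: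
  fixes H :: "'a::field fls poly"
  assumes "H \<noteq> 0"
  shows "\<exists>Hs. (\<forall>P\<in>#Hs. monic_irred P) \<and> H = smult (lead_coeff H) (prod_mset Hs)"
  using assms
proof (induction "degree H" arbitrary: H rule: less_induct)
  case (less H)
  show ?case
  proof (cases "irreducible H")
    case True
    define P where "P = smult (inverse (lead_coeff H)) H"
    have lH: "lead_coeff H \<noteq> 0" using less.prems by simp
    have "is_unit [:inverse (lead_coeff H):]"
      using lH by (auto simp: is_unit_const_poly_iff dvd_field_iff)
    moreover have "P = [:inverse (lead_coeff H):] * H" by (simp add: P_def)
    ultimately have "irreducible P" using True by (simp only: irreducible_mult_unit_left)
    moreover have "degree P > 0"
      using True less.prems by (auto simp: P_def is_unit_iff_degree irreducible_def)
    ultimately show ?thesis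
      using lH by (intro exI[of _ "{#P#}"]) (simp add: monic_irred_def P_def)
  next
    case reducible: False
    show ?thesis
    proof (cases "degree H = 0")
      case True
      then show ?thesis by (intro exI[of _ "{#}"]) (auto elim!: degree_eq_zeroE)
    next
      case False
      then obtain a b where ab: "H = a * b" "\<not> is_unit a" "\<not> is_unit b"
        using reducible less.prems by (auto simp: irreducible_def is_unit_iff_degree)
      have a0: "a \<noteq> 0" "b \<noteq> 0" using ab less.prems by auto
      have dH: "degree a < degree H" "degree b < degree H"
        using ab a0 by (auto simp: degree_mult_eq is_unit_iff_degree)
      obtain A B where "\<forall>P\<in>#A. monic_irred P" "a = smult (lead_coeff a) (prod_mset A)"
        "\<forall>P\<in>#B. monic_irred P" "b = smult (lead_coeff b) (prod_mset B)"
        using less.hyps[OF dH(1) a0(1)] less.hyps[OF dH(2) a0(2)] by blast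
      then have "H = smult (lead_coeff H) (prod_mset (A + B))"
        using ab(1) by (simp add: lead_coeff_mult) (metis mult_smult_left mult_smult_right smult_smult)
      then show ?thesis using \<open>\<forall>P\<in>#A. monic_irred P\<close> \<open>\<forall>P\<in>#B. monic_irred P\<close>
        by (intro exI[of _ "A + B"]) auto
    qed
  qed
qed

definition fps_poly_nth :: "'a::zero fps poly \<Rightarrow> nat \<Rightarrow> 'a poly" where
  "fps_poly_nth P k = map_poly (\<lambda>c. c $ k) P"

lemma coeff_fps_poly_nth: "coeff (fps_poly_nth P k) d = coeff P d $ k"
  by (simp add: fps_poly_nth_def coeff_map_poly)

lemma fps_poly_nth_mult:
  "fps_poly_nth (P * Q :: 'a::comm_ring_1 fps poly) k = (\<Sum>i\<le>k. fps_poly_nth P i * fps_poly_nth Q (k - i))"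
proof (rule poly_eqI)
  fix d
  have "coeff (fps_poly_nth (P * Q) k) d = (\<Sum>a\<le>d. \<Sum>i\<le>k. coeff P a $ i * coeff Q (d - a) $ (k - i))"
    by (simp add: coeff_fps_poly_nth coeff_mult fps_sum_nth fps_mult_nth atLeast0AtMost)
  also have "\<dots> = (\<Sum>i\<le>k. \<Sum>a\<le>d. coeff P a $ i * coeff Q (d - a) $ (k - i))"
    by (rule sum.swap)
  finally show "coeff (fps_poly_nth (P * Q) k) d = coeff (\<Sum>i\<le>k. fps_poly_nth P i * fps_poly_nth Q (k - i)) d"
    by (simp add: coeff_sum coeff_mult coeff_fps_poly_nth)
qed

lemma fps_poly_nth_eqI: "(\<And>k. fps_poly_nth P k = fps_poly_nth Q k) \<Longrightarrow> P = Q"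
  by (metis coeff_fps_poly_nth fps_ext poly_eqI)

definition fps_poly_of_nths :: "(nat \<Rightarrow> 'a::comm_monoid_add poly) \<Rightarrow> nat \<Rightarrow> 'a fps poly" where
  "fps_poly_of_nths F D = (\<Sum>d\<le>D. monom (Abs_fps (\<lambda>k. coeff (F k) d)) d)"

lemma coeff_fps_poly_of_nths:
  "coeff (fps_poly_of_nths F D) j = (if j \<le> D then Abs_fps (\<lambda>k. coeff (F k) j) else 0)"
  by (simp add: fps_poly_of_nths_def coeff_sum coeff_monom)

lemma fps_poly_nth_of_nths:
  assumes "\<And>k. degree (F k) \<le> D"
  shows "fps_poly_nth (fps_poly_of_nths F D) k = F k"
proof (rule poly_eqI)
  fix j
  have "coeff (F k) j = 0" if "D < j" using assms[of k] that by (simp add: coeff_eq_0)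
  then show "coeff (fps_poly_nth (fps_poly_of_nths F D) k) j = coeff (F k) j"
    by (simp add: coeff_fps_poly_nth coeff_fps_poly_of_nths)
qed

definition low_degree :: "nat \<Rightarrow> 'a::zero poly \<Rightarrow> bool" where
  "low_degree m p \<longleftrightarrow> (\<forall>d\<ge>m. coeff p d = 0)"

lemma low_degree_iff: "low_degree m p \<longleftrightarrow> p = 0 \<or> degree p < m"
proof
  assume "low_degree m p"
  then show "p = 0 \<or> degree p < m" unfolding low_degree_def by (metis leading_coeff_0_iff not_le)
qed (auto simp: low_degree_def coeff_eq_0)

lemma low_degree_mult:
  fixes p q :: "'a::idom poly"
  assumes "low_degree a p" "low_degree b q"
  shows "low_degree (a + b) (p * q)"
  using assms unfolding low_degree_iff by (cases "p = 0"; cases "q = 0") (auto simp: degree_mult_eq)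

lemma low_degree_diff: "low_degree m p \<Longrightarrow> low_degree m q \<Longrightarrow> low_degree m (p - q)"
  by (simp add: low_degree_def)

lemma low_degree_sum: "(\<And>i. i \<in> A \<Longrightarrow> low_degree m (p i)) \<Longrightarrow> low_degree m (sum p A)"
  by (induction A rule: infinite_finite_induct) (auto simp: low_degree_def)

text \<open>The \<open>X\<^sup>k\<close>-coefficients \<open>(G\<^sub>k, H\<^sub>k)\<close> of the lifted factors, obtained by solving
  \<open>g H\<^sub>k + h G\<^sub>k = P\<^sub>k - \<Sum>0<i<k. G\<^sub>i H\<^sub>k\<^sub>-\<^sub>i\<close> with \<open>deg G\<^sub>k < deg g\<close>.\<close>
function hensel_lift :: "'a::field fps poly \<Rightarrow> 'a poly \<Rightarrow> 'a poly \<Rightarrow> 'a poly \<Rightarrow> nat \<Rightarrow> 'a poly \<times> 'a poly" where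
  "hensel_lift P g h t k = (if k = 0 then (g, h) else
    (let r = fps_poly_nth P k - (\<Sum>i\<in>{1..<k}. fst (hensel_lift P g h t i) * snd (hensel_lift P g h t (k - i)));
         G = (t * r) mod g
     in (G, (r - h * G) div g)))"
  by pat_completeness auto
termination by (relation "measure (\<lambda>(P, g, h, t, k). k)") auto

declare hensel_lift.simps [simp del]

context
  fixes P :: "'a::field fps poly" and g h t :: "'a poly"
begin

private abbreviation G where "G k \<equiv> fst (hensel_lift P g h t k)"
private abbreviation H where "H k \<equiv> snd (hensel_lift P g h t k)"

lemma hensel_lift_0: "hensel_lift P g h t 0 = (g, h)"
  by (simp add: hensel_lift.simps)

lemma hensel_lift_equation:
  assumes "g \<noteq> 0" and bezout: "s * g + t * h = 1" and "0 < k"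
  shows "g * H k + h * G k = fps_poly_nth P k - (\<Sum>i\<in>{1..<k}. G i * H (k - i))"
proof -
  define r where "r = fps_poly_nth P k - (\<Sum>i\<in>{1..<k}. G i * H (k - i))"
  define G' where "G' = (t * r) mod g"
  have GH: "G k = G'" "H k = (r - h * G') div g"
    using assms(3) by (subst hensel_lift.simps, simp add: Let_def r_def G'_def)+
  have "r = (s * g + t * h) * r" using bezout by simp
  also have "\<dots> = g * (s * r) + h * (t * r)" by (simp add: algebra_simps)
  also have "t * r = (t * r div g) * g + G'" by (simp add: G'_def)
  finally have "r - h * G' = g * (s * r + h * (t * r div g))" by (simp add: algebra_simps)
  then have "g * H k = r - h * G'" using assms(1) by (simp add: GH(2))
  then show ?thesis unfolding r_def[symmetric] GH(1) by simp
qed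

lemma hensel_lift_low_degree:
  assumes monic_P: "lead_coeff P = 1" and reduction: "fps_poly_nth P 0 = g * h"
    and monic_g: "lead_coeff g = 1" and monic_h: "lead_coeff h = 1"
    and bezout: "s * g + t * h = 1" and "0 < k"
  shows "low_degree (degree g) (G k) \<and> low_degree (degree h) (H k)"
  using \<open>0 < k\<close>
proof (induction k rule: less_induct)
  case (less k)
  have g0: "g \<noteq> 0" and h0: "h \<noteq> 0" using monic_g monic_h by auto
  define n where "n = degree P"
  have "degree (fps_poly_nth P 0) = n"
    by (intro antisym degree_le le_degree) (simp_all add: coeff_fps_poly_nth n_def coeff_eq_0 monic_P)
  then have n: "n = degree g + degree h" using reduction g0 h0 by (simp add: degree_mult_eq)
  have "low_degree n (fps_poly_nth P k)"
    unfolding low_degree_def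
  proof (intro allI impI)
    fix d assume "n \<le> d"
    then show "coeff (fps_poly_nth P k) d = 0"
      using less.prems monic_P by (cases "d = n") (simp_all add: coeff_fps_poly_nth n_def coeff_eq_0)
  qed
  moreover have "low_degree n (G i * H (k - i))" if "i \<in> {1..<k}" for i
    using low_degree_mult less.IH[of i] less.IH[of "k - i"] that by (auto simp: n)
  ultimately have rhs: "low_degree n (g * H k + h * G k)"
    unfolding hensel_lift_equation[OF g0 bezout less.prems] by (intro low_degree_diff low_degree_sum)
  have "G k = (t * (fps_poly_nth P k - (\<Sum>i\<in>{1..<k}. G i * H (k - i)))) mod g"
    using less.prems by (subst hensel_lift.simps) (simp add: Let_def)
  then have G: "low_degree (degree g) (G k)"
    using degree_mod_less[OF g0] by (simp add: low_degree_iff)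
  then have "low_degree n (h * G k)"
    using h0 by (cases "G k = 0") (auto simp: low_degree_iff degree_mult_eq n)
  then have "low_degree n (g * H k)"
    using low_degree_diff[OF rhs] by (metis add_diff_cancel_right')
  then have "low_degree (degree h) (H k)"
    using g0 by (cases "H k = 0") (auto simp: low_degree_iff degree_mult_eq n)
  with G show ?case by blast
qed

end

lemma hensel_lifting:
  fixes P :: "'a::field fps poly" and g h :: "'a poly"
  assumes monic_P: "lead_coeff P = 1" and reduction: "fps_poly_nth P 0 = g * h"
    and monic_g: "lead_coeff g = 1" and monic_h: "lead_coeff h = 1" and bezout: "s * g + t * h = 1"
  obtains G H where "P = G * H" "lead_coeff G = 1" "degree G = degree g"
proof -
  define Gs where "Gs k = fst (hensel_lift P g h t k)" for k
  define Hs where "Hs k = snd (hensel_lift P g h t k)" for k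
  have g0: "g \<noteq> 0" using monic_g by auto
  have low: "0 < k \<Longrightarrow> low_degree (degree g) (Gs k) \<and> low_degree (degree h) (Hs k)" for k
    unfolding Gs_def Hs_def by (rule hensel_lift_low_degree[OF assms])
  have deg: "degree (Gs k) \<le> degree g \<and> degree (Hs k) \<le> degree h" for k
  proof (cases "k = 0")
    case False
    then show ?thesis using low[of k] by (auto simp: low_degree_iff)
  qed (simp add: Gs_def Hs_def hensel_lift_0)
  define G where "G = fps_poly_of_nths Gs (degree g)"
  define H where "H = fps_poly_of_nths Hs (degree h)"
  have nth_G: "fps_poly_nth G k = Gs k" and nth_H: "fps_poly_nth H k = Hs k" for k
    unfolding G_def H_def by (intro fps_poly_nth_of_nths deg[THEN conjunct1] deg[THEN conjunct2])+
  have "P = G * H"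
  proof (rule fps_poly_nth_eqI)
    fix k
    show "fps_poly_nth P k = fps_poly_nth (G * H) k"
    proof (cases "k = 0")
      case False
      then have "{..k} = insert 0 (insert k {1..<k})" by auto
      then show ?thesis using False hensel_lift_equation[OF g0 bezout, of k P]
        by (simp add: fps_poly_nth_mult nth_G nth_H Gs_def Hs_def hensel_lift_0 algebra_simps)
    qed (simp add: fps_poly_nth_mult nth_G nth_H Gs_def Hs_def hensel_lift_0 reduction)
  qed
  moreover have lead_G: "coeff G (degree g) = 1"
  proof -
    have "coeff (Gs k) (degree g) = (if k = 0 then 1 else 0)" for k
      using low[of k] monic_g by (auto simp: Gs_def hensel_lift_0 low_degree_def)
    then show ?thesis by (simp add: G_def coeff_fps_poly_of_nths fps_eq_iff)
  qed
  moreover have "degree G \<le> degree g"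
    by (rule degree_le) (simp add: G_def coeff_fps_poly_of_nths)
  moreover have "degree g \<le> degree G"
    by (rule le_degree) (simp add: lead_G)
  ultimately show ?thesis using that by simp
qed

subsection \<open>Newton--Puiseux\<close>

lemma coeff_linear_power_pred: "coeff ([:b, 1:] ^ Suc n) n = of_nat (Suc n) * (b :: 'a::comm_ring_1)"
proof (induction n)
  case (Suc n)
  have "[:b, 1:] ^ Suc (Suc n) = [:b, 1:] * [:b, 1:] ^ Suc n" by (rule power_Suc)
  also have "\<dots> = smult b ([:b, 1:] ^ Suc n) + pCons 0 ([:b, 1:] ^ Suc n)"
    by (simp add: mult_pCons_left)
  finally have "[:b, 1:] ^ Suc (Suc n) = smult b ([:b, 1:] ^ Suc n) + pCons 0 ([:b, 1:] ^ Suc n)" .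
  then have "coeff ([:b, 1:] ^ Suc (Suc n)) (Suc n) =
      b * coeff ([:b, 1:] ^ Suc n) (Suc n) + coeff ([:b, 1:] ^ Suc n) n"
    by simp
  then show ?case using Suc.IH coeff_linear_power[of b "Suc n"] by (simp add: algebra_simps)
qed simp

lemma pcompose_power_left: "pcompose (p ^ n) q = pcompose p q ^ n"
  by (induction n) (simp_all add: pcompose_mult pcompose_1)

lemma coeff_pcompose_shift_subleading:
  fixes p :: "'a::idom poly"
  assumes "degree p = Suc m"
  shows "coeff (pcompose p [:b, 1:]) m = coeff p m + of_nat (Suc m) * b * lead_coeff p"
proof -
  define c where "c = lead_coeff p"
  define r where "r = p - monom c (Suc m)"
  have deg_r: "degree r \<le> m"
    using assms by (intro degree_le) (auto simp: r_def c_def coeff_eq_0 less_Suc_eq)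
  have "coeff r m = coeff p m" by (simp add: r_def)
  moreover have "coeff (pcompose r [:b, 1:]) m = coeff r m"
  proof (cases "degree r = m")
    case True
    have "lead_coeff (pcompose r [:b, 1:]) = lead_coeff r" by (subst lead_coeff_comp) simp_all
    then show ?thesis using True by (simp add: degree_pcompose)
  next
    case False
    then show ?thesis using deg_r by (simp add: degree_pcompose coeff_eq_0)
  qed
  ultimately have r_shift: "coeff (pcompose r [:b, 1:]) m = coeff p m" by simp
  have "pcompose (monom c (Suc m)) [:b, 1:] = smult c ([:b, 1:] ^ Suc m)"
    by (simp add: monom_altdef pcompose_smult pcompose_power_left pcompose_pCons del: power_Suc)
  then have "coeff (pcompose (monom c (Suc m)) [:b, 1:]) m = c * (of_nat (Suc m) * b)"
    by (simp only: coeff_smult coeff_linear_power_pred)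
  moreover have "pcompose p [:b, 1:] = pcompose (monom c (Suc m)) [:b, 1:] + pcompose r [:b, 1:]"
    by (simp add: r_def pcompose_diff)
  ultimately show ?thesis using r_shift by (simp add: c_def algebra_simps)
qed

definition splits_at :: "nat \<Rightarrow> 'a::field fls poly \<Rightarrow> 'a fls multiset \<Rightarrow> bool" where
  "splits_at \<nu> H A \<longleftrightarrow>
     0 < \<nu> \<and> subst_pow \<nu> H = smult (fls_compose_power (lead_coeff H) \<nu>) (\<Prod>x\<in>#A. [:- x, 1:])"

lemma splits_at_pos: "splits_at \<nu> H A \<Longrightarrow> 0 < \<nu>"
  by (simp add: splits_at_def)

lemma splits_at_mult:
  assumes "splits_at \<nu> H A" "0 < k"
  shows "splits_at (\<nu> * k) H (image_mset (\<lambda>z. fls_compose_power z k) A)"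
proof -
  have nu: "0 < \<nu>" using assms(1) by (rule splits_at_pos)
  have "subst_pow (\<nu> * k) H = subst_pow k (subst_pow \<nu> H)" using nu assms(2) by (simp add: subst_pow_subst_pow)
  also have "\<dots> = smult (fls_compose_power (lead_coeff H) (\<nu> * k))
      (\<Prod>x\<in>#image_mset (\<lambda>z. fls_compose_power z k) A. [:- x, 1:])"
    using assms nu unfolding splits_at_def
    by (simp add: subst_pow_smult subst_pow_prod_mset subst_pow_linear fls_compose_power_compose_power
        image_mset.compositionality o_def)
  finally show ?thesis using nu assms(2) unfolding splits_at_def by simp
qed

lemma splits_at_size:
  assumes "splits_at \<nu> H A" "H \<noteq> 0"
  shows "size A = degree H"
proof -
  have nu: "0 < \<nu>" using assms(1) by (rule splits_at_pos)
  have "degree (subst_pow \<nu> H) = degree (\<Prod>x\<in>#A. [:- x, (1::'a fls):])"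
    using assms fls_compose_power_eq_0_iff[OF nu, of "lead_coeff H"] unfolding splits_at_def by simp
  then show ?thesis using nu by (simp add: degree_subst_pow degree_prod_linear)
qed

lemma splits_at_root:
  assumes "splits_at \<nu> P A" "z \<in># A"
  shows "poly (subst_pow \<nu> P) z = 0"
  using assms by (simp add: splits_at_def poly_prod_mset)

definition newton_rescale :: "nat \<Rightarrow> int \<Rightarrow> 'a::field fls poly \<Rightarrow> 'a fls poly" where
  "newton_rescale q c p =
     smult (fls_X_intpow (- c * int (degree p))) (pcompose (subst_pow q p) [:0, fls_X_intpow c:])"

lemma coeff_newton_rescale:
  "coeff (newton_rescale q c p) j =
     fls_shift (c * (int (degree p) - int j)) (fls_compose_power (coeff p j) q)"
  by (simp add: newton_rescale_def coeff_pcompose_linear coeff_subst_pow fls_X_intpow_power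
      fls_shifted_times_simps algebra_simps)

lemma newton_rescale_root:
  assumes "0 < q" "0 < m" "poly (subst_pow m (newton_rescale q c p)) w = 0"
  shows "poly (subst_pow (q * m) p) (fls_compose_power (fls_X_intpow c) m * w) = 0"
proof -
  have "subst_pow m (newton_rescale q c p) = smult (fls_compose_power (fls_X_intpow (- c * int (degree p))) m)
      (pcompose (subst_pow (q * m) p) [:0, fls_compose_power (fls_X_intpow c) m:])"
    using assms(1,2) by (simp add: newton_rescale_def subst_pow_smult subst_pow_pcompose subst_pow_pCons
        subst_pow_const subst_pow_subst_pow)
  then show ?thesis
    using assms(2,3) by (simp add: poly_pcompose fls_compose_power_eq_0_iff mult.commute fls_shift_eq0_iff)
qed

text \<open>Choosing \<open>c/q\<close> as the least slope \<open>min ord(p\<^sub>j)/(n - j)\<close> of the Newton polygon makes all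
  coefficients integral and some coefficient below the leading one a unit.\<close>
lemma newton_rescale_integral:
  fixes p :: "'a::field fls poly"
  assumes monic: "lead_coeff p = 1" and j1: "j1 < degree p" "coeff p j1 \<noteq> 0"
  obtains q c where "0 < q"
    "\<And>j. coeff (newton_rescale q c p) j \<noteq> 0 \<Longrightarrow> 0 \<le> fls_subdegree (coeff (newton_rescale q c p) j)"
    "\<exists>j < degree p. coeff (newton_rescale q c p) j \<noteq> 0 \<and>
        fls_subdegree (coeff (newton_rescale q c p) j) = 0"
proof -
  define n where "n = degree p"
  define S where "S = {j. j < n \<and> coeff p j \<noteq> 0}"
  have finS: "finite S" and neS: "S \<noteq> {}" using j1 by (auto simp: S_def n_def)
  define q :: nat where "q = fact n"
  have q0: "0 < q" by (simp add: q_def)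
  define slope where "slope j = int (q div (n - j)) * fls_subdegree (coeff p j)" for j
  have slope: "slope j * int (n - j) = int q * fls_subdegree (coeff p j)" if "j < n" for j
  proof -
    have "(n - j) dvd q" unfolding q_def using that by (intro dvd_fact) auto
    then have "int (q div (n - j)) * int (n - j) = int q" by (metis dvd_div_mult_self of_nat_mult)
    then show ?thesis by (simp add: slope_def mult_ac)
  qed
  define c where "c = Min (slope ` S)"
  have "c \<in> slope ` S" unfolding c_def using finS neS by (intro Min_in) auto
  then obtain j0 where j0: "j0 \<in> S" "slope j0 = c" by auto
  have c_le: "c \<le> slope j" if "j \<in> S" for j using finS that by (simp add: c_def)
  have subdeg: "fls_subdegree (coeff (newton_rescale q c p) j) = int q * fls_subdegree (coeff p j) - c * (int n - int j)"
    if "coeff p j \<noteq> 0" for j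
    using that q0
    by (simp add: coeff_newton_rescale fls_subdegree_compose_power fls_compose_power_eq_0_iff n_def)
  show ?thesis
  proof (rule that[OF q0])
    fix j assume nz: "coeff (newton_rescale q c p) j \<noteq> 0"
    then have cj: "coeff p j \<noteq> 0" by (auto simp: coeff_newton_rescale)
    then have jn: "j \<le> n" using le_degree n_def by blast
    show "0 \<le> fls_subdegree (coeff (newton_rescale q c p) j)"
    proof (cases "j = n")
      case False
      then have "j \<in> S" using jn cj by (simp add: S_def)
      then have "c * (int n - int j) \<le> slope j * (int n - int j)" using jn by (intro mult_right_mono c_le) auto
      also have "\<dots> = int q * fls_subdegree (coeff p j)" using slope[of j] False jn by (simp add: of_nat_diff)
      finally show ?thesis using subdeg[OF cj] by simp
    qed (use subdeg[OF cj] monic n_def in simp)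
  next
    have j0n: "j0 < n" and cj0: "coeff p j0 \<noteq> 0" using j0(1) by (auto simp: S_def)
    show "\<exists>j<degree p. coeff (newton_rescale q c p) j \<noteq> 0 \<and>
        fls_subdegree (coeff (newton_rescale q c p) j) = 0"
    proof (intro exI conjI)
      show "j0 < degree p" using j0n by (simp add: n_def)
      show "coeff (newton_rescale q c p) j0 \<noteq> 0"
        using q0 cj0 by (simp add: coeff_newton_rescale fls_compose_power_eq_0_iff fls_shift_eq0_iff)
      show "fls_subdegree (coeff (newton_rescale q c p) j0) = 0"
        using subdeg[OF cj0] slope[OF j0n] j0(2) j0n by (simp add: of_nat_diff)
    qed
  qed
qed

lemma map_poly_fps_to_fls_regpart:
  assumes "\<And>j. coeff p j \<noteq> 0 \<Longrightarrow> 0 \<le> fls_subdegree (coeff p j)"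
  shows "map_poly fps_to_fls (map_poly fls_regpart p) = p"
proof (rule poly_eqI)
  fix j show "coeff (map_poly fps_to_fls (map_poly fls_regpart p)) j = coeff p j"
    using assms[of j] by (cases "coeff p j = 0") (simp_all add: coeff_map_poly)
qed

text \<open>Split off any root \<open>r\<close> with its multiplicity \<open>e\<close>; \<open>e = n\<close> would give \<open>p = (Y - r)\<^sup>n\<close>,
  whose subleading coefficient \<open>-n r\<close> vanishes only if \<open>p = Y\<^sup>n\<close>.\<close>
lemma trace_free_poly_coprime_split:
  fixes p :: "'a::field_char_0 poly"
  assumes ac: "algebraically_closed TYPE('a)" and monic: "lead_coeff p = 1"
    and deg: "degree p = Suc n" and trace: "coeff p n = 0" and j0: "j0 < Suc n" "coeff p j0 \<noteq> 0"
  obtains r e h s t where "p = [:- r, 1:] ^ e * h" "0 < e" "e < Suc n" "lead_coeff h = 1"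
    "s * [:- r, 1:] ^ e + t * h = 1"
proof -
  have p0: "p \<noteq> 0" using deg by auto
  obtain r where r: "poly p r = 0" using ac deg unfolding algebraically_closed_def by (metis zero_less_Suc)
  define e where "e = order r p"
  obtain h where h: "p = [:- r, 1:] ^ e * h" "\<not> [:- r, 1:] dvd h"
    using order_decomp[OF p0, of r] by (auto simp: e_def)
  have e0: "0 < e" using r p0 by (simp add: e_def order_gt_0_iff)
  have h0: "h \<noteq> 0" using h p0 by auto
  have lead_h: "lead_coeff h = 1"
    using arg_cong[OF h(1), of lead_coeff] monic by (simp add: lead_coeff_mult lead_coeff_power)
  have deg_sum: "Suc n = e + degree h"
    using arg_cong[OF h(1), of degree] deg h0 by (simp add: degree_mult_eq degree_linear_power)
  have "0 < degree h"
  proof (rule ccontr)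
    assume "\<not> 0 < degree h"
    then have "h = 1" using lead_h by (auto elim!: degree_eq_zeroE)
    then have p_pow: "p = [:- r, 1:] ^ Suc n" using h(1) deg_sum by simp
    then have "of_nat (Suc n) * (- r) = 0"
      using trace coeff_linear_power_pred[of "- r" n] by simp
    then have "r = 0" by (simp only: mult_eq_0_iff of_nat_eq_0_iff neg_equal_0_iff_equal) simp
    then have "p = monom 1 (Suc n)" by (simp add: p_pow monom_altdef)
    then show False using j0 by (simp add: coeff_monom)
  qed
  then have "e < Suc n" using deg_sum by simp
  moreover obtain s t where "s * [:- r, 1:] ^ e + t * h = 1"
  proof (rule poly_bezout_one)
    fix d assume d: "d dvd [:- r, 1:] ^ e" "d dvd h" "d \<noteq> 0"
    show "degree d = 0"
    proof (rule ccontr)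
      assume "degree d \<noteq> 0"
      then obtain x where x: "poly d x = 0" using ac unfolding algebraically_closed_def by auto
      then have "poly ([:- r, 1:] ^ e) x = 0" using d(1) by (metis dvdE poly_mult mult_zero_left)
      then have "x = r" by simp
      moreover have "poly h x = 0" using d(2) x by (metis dvdE poly_mult mult_zero_left)
      ultimately show False using h(2) by (simp add: poly_eq_0_iff_dvd)
    qed
  qed simp
  ultimately show ?thesis using that h(1) e0 lead_h by blast
qed

lemma newton_rescale_reduction:
  fixes p :: "'a::field fls poly"
  assumes monic: "lead_coeff p = 1" and deg: "degree p = Suc n" and trace: "coeff p n = 0"
    and j1: "j1 < degree p" "coeff p j1 \<noteq> 0"
  obtains q c P j0 where "0 < q" "map_poly fps_to_fls P = newton_rescale q c p"
    "lead_coeff P = 1" "degree P = Suc n" "lead_coeff (fps_poly_nth P 0) = 1"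
    "degree (fps_poly_nth P 0) = Suc n" "coeff (fps_poly_nth P 0) n = 0"
    "j0 < Suc n" "coeff (fps_poly_nth P 0) j0 \<noteq> 0"
proof -
  obtain q c where q0: "0 < q"
    and integral: "\<And>j. coeff (newton_rescale q c p) j \<noteq> 0 \<Longrightarrow> 0 \<le> fls_subdegree (coeff (newton_rescale q c p) j)"
    and unit: "\<exists>j<degree p. coeff (newton_rescale q c p) j \<noteq> 0 \<and> fls_subdegree (coeff (newton_rescale q c p) j) = 0"
    using newton_rescale_integral[OF monic j1] by blast
  define p2 where "p2 = newton_rescale q c p"
  define P where "P = map_poly fls_regpart p2"
  have P_p2: "map_poly fps_to_fls P = p2"
    unfolding P_def p2_def by (rule map_poly_fps_to_fls_regpart[OF integral])
  have coeff_p2: "coeff p2 j = fls_shift (c * (int (Suc n) - int j)) (fls_compose_power (coeff p j) q)" for j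
    by (simp add: p2_def coeff_newton_rescale deg)
  have coeff_p2_lead: "coeff p2 (Suc n) = 1" using monic deg q0 by (simp add: coeff_p2)
  have coeff_p2_high: "coeff p2 j = 0" if "Suc n < j" for j using that deg by (simp add: coeff_p2 coeff_eq_0)
  have "degree p2 = Suc n"
    by (rule antisym[OF degree_le le_degree]) (auto simp: coeff_p2_high coeff_p2_lead)
  then have deg_P: "degree P = Suc n" using arg_cong[OF P_p2, of degree] by (simp add: degree_map_poly)
  have coeff_red: "coeff (fps_poly_nth P 0) j = coeff p2 j $$ 0" for j
    by (simp add: coeff_fps_poly_nth P_def coeff_map_poly)
  have deg_red: "degree (fps_poly_nth P 0) = Suc n"
    by (rule antisym[OF degree_le le_degree]) (auto simp: coeff_red coeff_p2_high coeff_p2_lead)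
  obtain j0 where j0: "j0 < Suc n" "coeff p2 j0 \<noteq> 0" "fls_subdegree (coeff p2 j0) = 0"
    using unit deg by (auto simp: p2_def)
  show ?thesis
  proof (rule that[OF q0 P_p2[unfolded p2_def] _ deg_P _ deg_red _ j0(1)])
    show "lead_coeff P = 1" using deg_P coeff_p2_lead by (simp add: P_def coeff_map_poly)
    show "lead_coeff (fps_poly_nth P 0) = 1" by (simp add: coeff_red deg_red coeff_p2_lead)
    show "coeff (fps_poly_nth P 0) n = 0" using trace by (simp add: coeff_red coeff_p2)
    show "coeff (fps_poly_nth P 0) j0 \<noteq> 0" using nth_fls_subdegree_nonzero[OF j0(2)] j0(3) by (simp add: coeff_red)
  qed
qed

text \<open>The reduction modulo \<open>X\<close> after the Newton polygon substitution is neither \<open>Y\<^sup>n\<close> nor, by the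
  vanishing subleading coefficient, a power of a linear polynomial; Hensel lifting its coprime
  splitting yields a proper factor.\<close>
lemma newton_rescale_proper_factor:
  fixes p :: "'a::field_char_0 fls poly"
  assumes ac: "algebraically_closed TYPE('a)" and monic: "lead_coeff p = 1"
    and deg: "degree p = Suc n" and trace: "coeff p n = 0" and j1: "j1 < degree p" "coeff p j1 \<noteq> 0"
  obtains q c G H where "0 < q" "newton_rescale q c p = G * H" "lead_coeff G = 1"
    "0 < degree G" "degree G < degree p"
proof -
  obtain q c P j0 where q0: "0 < q" and P: "map_poly fps_to_fls P = newton_rescale q c p"
    "lead_coeff P = 1" "degree P = Suc n" and red: "lead_coeff (fps_poly_nth P 0) = 1"
    "degree (fps_poly_nth P 0) = Suc n" "coeff (fps_poly_nth P 0) n = 0"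
    "j0 < Suc n" "coeff (fps_poly_nth P 0) j0 \<noteq> 0"
    by (rule newton_rescale_reduction[OF monic deg trace j1])
  obtain r e h s t where split: "fps_poly_nth P 0 = [:- r, 1:] ^ e * h" "0 < e" "e < Suc n"
    "lead_coeff h = 1" "s * [:- r, 1:] ^ e + t * h = 1"
    by (rule trace_free_poly_coprime_split[OF ac red])
  have monic_g: "lead_coeff ([:- r, 1:] ^ e) = 1" by (simp add: lead_coeff_power)
  obtain G H where GH: "P = G * H" "lead_coeff G = 1" "degree G = degree ([:- r, 1:] ^ e)"
    by (rule hensel_lifting[OF P(2) split(1) monic_g split(4,5)])
  interpret to_fls: idom_hom "fps_to_fls :: 'a fps \<Rightarrow> 'a fls" by (rule idom_hom_fps_to_fls)
  have "newton_rescale q c p = map_poly fps_to_fls G * map_poly fps_to_fls H"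
    using P(1) by (simp add: GH(1) to_fls.map_poly_mult)
  moreover have "lead_coeff (map_poly fps_to_fls G) = 1" "degree (map_poly fps_to_fls G) = e"
    using GH(2,3) by (simp_all add: degree_map_poly coeff_map_poly degree_linear_power)
  ultimately show ?thesis using that q0 split(2,3) deg by simp
qed

theorem puiseux_root:
  fixes p :: "'a::field_char_0 fls poly"
  assumes ac: "algebraically_closed TYPE('a)"
  shows "lead_coeff p = 1 \<Longrightarrow> degree p > 0 \<Longrightarrow> \<exists>m>0. \<exists>z. poly (subst_pow m p) z = 0"
proof (induction "degree p" arbitrary: p rule: less_induct)
  case (less p)
  define n where "n = degree p"
  obtain n' where n': "n = Suc n'" using less.prems(2) unfolding n_def by (cases "degree p") auto
  define p1 where "p1 = pcompose p [:- coeff p n' / of_nat n, 1:]"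
  have deg_p1: "degree p1 = Suc n'" using n' by (simp add: p1_def degree_pcompose n_def)
  have monic_p1: "lead_coeff p1 = 1" using less.prems(1) by (simp add: p1_def lead_coeff_comp)
  have trace_p1: "coeff p1 n' = 0"
    using coeff_pcompose_shift_subleading[of p n'] n' n_def less.prems(1)
    by (simp add: p1_def del: of_nat_Suc)
  have "\<exists>m>0. \<exists>z. poly (subst_pow m p1) z = 0"
  proof (cases "\<forall>j<n. coeff p1 j = 0")
    case True
    then have "poly p1 0 = 0" using n' by (simp add: poly_0_coeff_0)
    then show ?thesis by (intro exI[of _ "Suc 0"]) auto
  next
    case False
    then obtain j1 where "j1 < degree p1" "coeff p1 j1 \<noteq> 0" using deg_p1 n' by auto
    then obtain q c G H where q: "0 < q" and GH: "newton_rescale q c p1 = G * H" "lead_coeff G = 1"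
      "0 < degree G" "degree G < degree p1"
      using newton_rescale_proper_factor[OF ac monic_p1 deg_p1 trace_p1] by blast
    then obtain m w where m: "0 < m" "poly (subst_pow m G) w = 0"
      using less.hyps[of G] deg_p1 n' n_def by auto
    then have "poly (subst_pow m (newton_rescale q c p1)) w = 0" by (simp add: GH(1) subst_pow_mult)
    then have "poly (subst_pow (q * m) p1) (fls_compose_power (fls_X_intpow c) m * w) = 0"
      by (rule newton_rescale_root[OF q m(1)])
    then show ?thesis using q m(1) by (intro exI[of _ "q * m"]) auto
  qed
  then obtain m z where "0 < m" "poly (subst_pow m p1) z = 0" by blast
  moreover have "subst_pow m p1 = pcompose (subst_pow m p) [:fls_compose_power (- coeff p n' / of_nat n) m, 1:]"
    if "0 < m" for m
    using that by (simp add: p1_def subst_pow_pcompose subst_pow_pCons subst_pow_const)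
  ultimately show ?case by (auto simp: poly_pcompose)
qed

theorem puiseux_splitting:
  fixes p :: "'a::field_char_0 fls poly"
  assumes ac: "algebraically_closed TYPE('a)"
  shows "p \<noteq> 0 \<Longrightarrow> \<exists>\<nu> A. splits_at \<nu> p A"
proof (induction "degree p" arbitrary: p rule: less_induct)
  case (less p)
  show ?case
  proof (cases "degree p = 0")
    case True
    then obtain c where c: "p = [:c:]" by (elim degree_eq_zeroE)
    show ?thesis by (intro exI[of _ 1] exI[of _ "{#}"]) (simp add: splits_at_def c)
  next
    case False
    define l where "l = lead_coeff p"
    have l0: "l \<noteq> 0" using less.prems by (simp add: l_def)
    define p1 where "p1 = smult (inverse l) p"
    have "lead_coeff p1 = 1" "degree p1 = degree p" using l0 by (simp_all add: p1_def l_def)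
    then obtain m z where m: "0 < m" and "poly (subst_pow m p1) z = 0"
      using puiseux_root[OF ac, of p1] False by auto
    then have "poly (subst_pow m p) z = 0"
      using l0 by (simp add: p1_def subst_pow_smult fls_compose_power_eq_0_iff l_def)
    then have "[:- z, 1:] dvd subst_pow m p" by (simp add: poly_eq_0_iff_dvd)
    then obtain q where q: "subst_pow m p = [:- z, 1:] * q" by (elim dvdE)
    have q0: "q \<noteq> 0"
    proof
      assume "q = 0"
      then have "subst_pow m p = 0" using q by simp
      then show False using m less.prems by (simp add: subst_pow_eq_0_iff)
    qed
    then have "degree (subst_pow m p) = Suc (degree q)" unfolding q by (subst degree_mult_eq) auto
    then have "degree q < degree p" using m by (simp add: degree_subst_pow)
    then obtain \<nu> A where A: "splits_at \<nu> q A" using less.hyps[OF _ q0] by blast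
    have nu: "0 < \<nu>" using A by (rule splits_at_pos)
    have "lead_coeff (subst_pow m p) = lead_coeff q" unfolding q lead_coeff_mult by simp
    then have lead_q: "lead_coeff q = fls_compose_power (lead_coeff p) m"
      using m by (simp add: lead_coeff_subst_pow)
    have "subst_pow (m * \<nu>) p = subst_pow \<nu> (subst_pow m p)" using nu m by (simp add: subst_pow_subst_pow)
    also have "\<dots> = [:- fls_compose_power z \<nu>, 1:] * subst_pow \<nu> q"
      using nu by (simp only: q subst_pow_mult subst_pow_linear)
    also have "\<dots> = smult (fls_compose_power (lead_coeff p) (m * \<nu>))
         (\<Prod>x\<in>#add_mset (fls_compose_power z \<nu>) A. [:- x, 1:])"
      using A nu m unfolding splits_at_def by (simp add: lead_q fls_compose_power_compose_power)
    finally have "splits_at (m * \<nu>) p (add_mset (fls_compose_power z \<nu>) A)"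
      using nu m by (simp add: splits_at_def)
    then show ?thesis by blast
  qed
qed

lemma common_splitting:
  fixes Ps :: "'a::field_char_0 fls poly multiset"
  assumes ac: "algebraically_closed TYPE('a)" and nz: "\<forall>P\<in>#Ps. P \<noteq> 0"
  shows "\<exists>\<nu>. 0 < \<nu> \<and> (\<forall>P\<in>#Ps. \<exists>A. splits_at \<nu> P A)"
  using nz
proof (induction Ps)
  case empty
  show ?case by (intro exI[of _ 1]) simp
next
  case (add P Ps)
  have "\<forall>Q\<in>#Ps. Q \<noteq> 0" using add.prems by simp
  then obtain \<nu>1 where \<nu>1: "0 < \<nu>1" "\<forall>Q\<in>#Ps. \<exists>A. splits_at \<nu>1 Q A"
    using add.IH by blast
  have "P \<noteq> 0" using add.prems by simp
  then obtain \<nu>0 A0 where A0: "splits_at \<nu>0 P A0" using puiseux_splitting[OF ac] by blast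
  have \<nu>0: "0 < \<nu>0" using A0 by (rule splits_at_pos)
  have "splits_at (\<nu>0 * \<nu>1) P (image_mset (\<lambda>z. fls_compose_power z \<nu>1) A0)"
    by (rule splits_at_mult[OF A0 \<nu>1(1)])
  moreover have "\<exists>A. splits_at (\<nu>0 * \<nu>1) Q A" if Q: "Q \<in># Ps" for Q
  proof -
    obtain A where "splits_at \<nu>1 Q A" using \<nu>1(2) Q by blast
    from splits_at_mult[OF this \<nu>0] show ?thesis by (subst mult.commute) (rule exI)
  qed
  ultimately show ?case using \<nu>0 \<nu>1 by (intro exI[of _ "\<nu>0 * \<nu>1"]) auto
qed

subsection \<open>Intersection multiplicities\<close>

lemma ordX_nonzero: "f \<noteq> 0 \<Longrightarrow> ordX f = ereal (real_of_int (fls_subdegree f))"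
  by (simp add: ordX_def)

lemma sum_mset_ordX:
  "(\<Sum>z\<in>#A. ordX (g z)) =
     (if \<exists>z\<in>#A. g z = 0 then \<infinity> else ereal (real_of_int (\<Sum>z\<in>#A. fls_subdegree (g z))))"
proof (induction A)
  case (add x A)
  show ?case
  proof (cases "g x = 0")
    case True
    then show ?thesis using add.IH by (simp add: ordX_def split: if_splits)
  next
    case False
    then show ?thesis using add.IH by (auto simp: ordX_nonzero)
  qed
qed simp

definition intm_value :: "nat \<Rightarrow> 'a::field fls multiset \<Rightarrow> 'a fls poly \<Rightarrow> 'a fls poly \<Rightarrow> ereal" where
  "intm_value \<nu> A H G = ereal (real (degree G)) * ordX (lead_coeff H)
      + ereal (1 / real \<nu>) * (\<Sum>z\<in>#A. ordX (poly (subst_pow \<nu> G) z))"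

lemma intm_value_finite:
  assumes "H \<noteq> 0" "\<forall>z\<in>#A. poly (subst_pow \<nu> G) z \<noteq> 0"
  shows "intm_value \<nu> A H G = ereal (real (degree G) * real_of_int (fls_subdegree (lead_coeff H))
     + real_of_int (\<Sum>z\<in>#A. fls_subdegree (poly (subst_pow \<nu> G) z)) / real \<nu>)"
  using assms by (auto simp: intm_value_def sum_mset_ordX ordX_nonzero)

lemma intm_value_infinite:
  assumes "H \<noteq> 0" "0 < \<nu>" "\<exists>z\<in>#A. poly (subst_pow \<nu> G) z = 0"
  shows "intm_value \<nu> A H G = \<infinity>"
  using assms by (auto simp: intm_value_def sum_mset_ordX ordX_nonzero)

lemma intm_value_compose_power:
  fixes H G :: "'a::field fls poly"
  assumes H0: "H \<noteq> 0" and nu: "0 < \<nu>" and k: "0 < k"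
  shows "intm_value (\<nu> * k) (image_mset (\<lambda>z. fls_compose_power z k) A) H G = intm_value \<nu> A H G"
proof -
  define g where "g = poly (subst_pow \<nu> G)"
  have val: "poly (subst_pow (\<nu> * k) G) (fls_compose_power z k) = fls_compose_power (g z) k" for z
    using nu k by (simp add: g_def subst_pow_subst_pow[symmetric] poly_subst_pow_compose_power)
  show ?thesis
  proof (cases "\<exists>z\<in>#A. g z = 0")
    case True
    then show ?thesis
      using H0 nu k by (auto simp: intm_value_infinite val g_def fls_compose_power_eq_0_iff)
  next
    case False
    then have "(\<Sum>z\<in>#image_mset (\<lambda>z. fls_compose_power z k) A. fls_subdegree (poly (subst_pow (\<nu> * k) G) z)) =
        int k * (\<Sum>z\<in>#A. fls_subdegree (g z))"
      using k by (simp add: val fls_subdegree_compose_power sum_mset_distrib_left image_mset.compositionality o_def)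
    then show ?thesis
      using False H0 nu k by (simp add: intm_value_finite val fls_compose_power_eq_0_iff g_def)
  qed
qed

lemma intm_value_independent:
  fixes H G :: "'a::field fls poly"
  assumes H0: "H \<noteq> 0" and s1: "splits_at \<nu>1 H A1" and s2: "splits_at \<nu>2 H A2"
  shows "intm_value \<nu>1 A1 H G = intm_value \<nu>2 A2 H G"
proof -
  have p1: "0 < \<nu>1" and p2: "0 < \<nu>2" using s1 s2 by (auto simp: splits_at_def)
  define B1 where "B1 = image_mset (\<lambda>z. fls_compose_power z \<nu>2) A1"
  define B2 where "B2 = image_mset (\<lambda>z. fls_compose_power z \<nu>1) A2"
  have "splits_at (\<nu>1 * \<nu>2) H B1" unfolding B1_def by (rule splits_at_mult[OF s1 p2])
  moreover have "splits_at (\<nu>1 * \<nu>2) H B2" unfolding B2_def using splits_at_mult[OF s2 p1] by (simp add: mult.commute)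
  moreover have "fls_compose_power (lead_coeff H) (\<nu>1 * \<nu>2) \<noteq> 0"
    using H0 p1 p2 by (simp add: fls_compose_power_eq_0_iff)
  ultimately have "B1 = B2" unfolding splits_at_def by (metis smult_prod_linear_eqD)
  then show ?thesis
    using intm_value_compose_power[OF H0 p1 p2, of A1 G] intm_value_compose_power[OF H0 p2 p1, of A2 G]
    by (simp add: B1_def B2_def mult.commute)
qed

lemma prod_list_map_eq_prod_mset: "(\<Prod>x\<leftarrow>xs. f x) = (\<Prod>x\<in>#mset xs. f x)"
  by (induction xs) simp_all

lemma sum_list_map_eq_sum_mset: "(\<Sum>x\<leftarrow>xs. f x) = (\<Sum>x\<in>#mset xs. f x)"
  by (induction xs) simp_all

lemma splitting_with_ramification:
  fixes H :: "'a::field_char_0 fls poly"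
  assumes ac: "algebraically_closed TYPE('a)" and H0: "H \<noteq> 0"
  obtains \<nu> A where "splits_at \<nu> H A" "\<forall>P. monic_irred P \<and> P dvd H \<longrightarrow> degree P dvd \<nu>"
proof -
  obtain \<nu> A where "splits_at \<nu> H A" using puiseux_splitting[OF ac H0] by auto
  then have "splits_at (\<nu> * fact (degree H)) H (image_mset (\<lambda>z. fls_compose_power z (fact (degree H))) A)"
    by (rule splits_at_mult) simp
  moreover have "degree P dvd \<nu> * fact (degree H)" if "monic_irred P \<and> P dvd H" for P
    using that H0 by (intro dvd_mult dvd_fact) (auto simp: monic_irred_def dvd_imp_degree_le)
  ultimately show ?thesis using that by blast
qed

text \<open>The choice made by \<open>SOME\<close> in the definition of \<open>intm\<close> is immaterial.\<close>
lemma intm_eq_intm_value: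
  fixes H G :: "'a::field_char_0 fls poly"
  assumes ac: "algebraically_closed TYPE('a)" and H0: "H \<noteq> 0" and G0: "G \<noteq> 0" and s: "splits_at \<nu> H A"
  shows "intm H G = intm_value \<nu> A H G"
proof -
  define admissible where "admissible v \<longleftrightarrow> (\<exists>\<nu> zs. \<nu> > 0 \<and>
              (\<forall>P. monic_irred P \<and> P dvd H \<longrightarrow> degree P dvd \<nu>) \<and>
              length zs = degree H \<and>
              subst_pow \<nu> H = smult (fls_compose_power (lead_coeff H) \<nu>) (\<Prod>z\<leftarrow>zs. [:- z, 1:]) \<and>
              v = ereal (real (degree G)) * ordX (lead_coeff H)
                  + ereal (1 / real \<nu>) * (\<Sum>z\<leftarrow>zs. ordX (poly (subst_pow \<nu> G) z)))" for v
  have admissible_iff: "admissible v \<longleftrightarrow> (\<exists>\<nu>' A'. splits_at \<nu>' H A' \<and>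
      (\<forall>P. monic_irred P \<and> P dvd H \<longrightarrow> degree P dvd \<nu>') \<and> v = intm_value \<nu>' A' H G)" for v
  proof
    assume "admissible v"
    then obtain \<nu>' zs where "\<nu>' > 0" "\<forall>P. monic_irred P \<and> P dvd H \<longrightarrow> degree P dvd \<nu>'"
      "subst_pow \<nu>' H = smult (fls_compose_power (lead_coeff H) \<nu>') (\<Prod>z\<leftarrow>zs. [:- z, 1:])"
      "v = ereal (real (degree G)) * ordX (lead_coeff H)
         + ereal (1 / real \<nu>') * (\<Sum>z\<leftarrow>zs. ordX (poly (subst_pow \<nu>' G) z))"
      unfolding admissible_def by blast
    then show "\<exists>\<nu>' A'. splits_at \<nu>' H A' \<and>
      (\<forall>P. monic_irred P \<and> P dvd H \<longrightarrow> degree P dvd \<nu>') \<and> v = intm_value \<nu>' A' H G"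
      by (intro exI[of _ \<nu>'] exI[of _ "mset zs"])
        (simp add: splits_at_def intm_value_def prod_list_map_eq_prod_mset sum_list_map_eq_sum_mset)
  next
    assume "\<exists>\<nu>' A'. splits_at \<nu>' H A' \<and>
      (\<forall>P. monic_irred P \<and> P dvd H \<longrightarrow> degree P dvd \<nu>') \<and> v = intm_value \<nu>' A' H G"
    then obtain \<nu>' A' where A': "splits_at \<nu>' H A'" "\<forall>P. monic_irred P \<and> P dvd H \<longrightarrow> degree P dvd \<nu>'"
      "v = intm_value \<nu>' A' H G" by blast
    obtain zs where zs: "mset zs = A'" using ex_mset by blast
    have "length zs = degree H" using splits_at_size[OF A'(1) H0] zs by auto
    then show "admissible v" unfolding admissible_def using A' zs
      by (intro exI[of _ \<nu>'] exI[of _ zs])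
        (auto simp: splits_at_def intm_value_def prod_list_map_eq_prod_mset sum_list_map_eq_sum_mset)
  qed
  obtain \<nu>' A' where "splits_at \<nu>' H A'" "\<forall>P. monic_irred P \<and> P dvd H \<longrightarrow> degree P dvd \<nu>'"
    using splitting_with_ramification[OF ac H0] .
  then have "admissible (intm_value \<nu>' A' H G)" by (auto simp: admissible_iff)
  then have "admissible (SOME v. admissible v)" by (rule someI)
  then have "(SOME v. admissible v) = intm_value \<nu> A H G"
    using intm_value_independent[OF H0 _ s] by (auto simp: admissible_iff)
  moreover have "intm H G = (SOME v. admissible v)" using H0 G0 by (simp add: intm_def admissible_def)
  ultimately show ?thesis by simp
qed

lemma intm_eq_finite:
  fixes H G :: "'a::field_char_0 fls poly"
  assumes ac: "algebraically_closed TYPE('a)" and "H \<noteq> 0" "G \<noteq> 0" "splits_at \<nu> H A"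
    and "\<forall>z\<in>#A. poly (subst_pow \<nu> G) z \<noteq> 0"
  shows "intm H G = ereal (real (degree G) * real_of_int (fls_subdegree (lead_coeff H))
     + real_of_int (\<Sum>z\<in>#A. fls_subdegree (poly (subst_pow \<nu> G) z)) / real \<nu>)"
  using intm_eq_intm_value[OF assms(1-4)] intm_value_finite[OF assms(2,5)] by simp

lemma fls_subdegree_poly_prod_linear:
  assumes "\<forall>w\<in>#B. z \<noteq> w"
  shows "fls_subdegree (poly (\<Prod>x\<in>#B. [:- x, 1:]) z) = (\<Sum>w\<in>#B. fls_subdegree (z - w :: 'a::field fls))"
  using assms
proof (induction B)
  case (add x B)
  have "poly (\<Prod>x\<in>#B. [:- x, 1:]) z \<noteq> 0" "z - x \<noteq> 0" using add.prems by (auto simp: poly_prod_mset)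
  then have "fls_subdegree ((z - x) * poly (\<Prod>x\<in>#B. [:- x, 1:]) z) =
      fls_subdegree (z - x) + (\<Sum>w\<in>#B. fls_subdegree (z - w))"
    using add by (simp add: fls_subdegree_mult)
  moreover have "poly (\<Prod>x\<in>#add_mset x B. [:- x, 1:]) z = (z - x) * poly (\<Prod>x\<in>#B. [:- x, 1:]) z"
    by (simp add: algebra_simps)
  ultimately show ?case by simp
qed simp

lemma poly_subst_pow_splits_nonzero:
  assumes "splits_at \<nu> G B" "G \<noteq> 0" "z \<notin># B"
  shows "poly (subst_pow \<nu> G) z \<noteq> 0"
  using assms by (auto simp: splits_at_def poly_prod_mset fls_compose_power_eq_0_iff)

lemma sum_subdegree_poly_subst_pow:
  fixes G :: "'a::field fls poly"
  assumes sG: "splits_at \<nu> G B" and G0: "G \<noteq> 0" and disjoint: "\<forall>z\<in>#A. z \<notin># B"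
  shows "(\<Sum>z\<in>#A. fls_subdegree (poly (subst_pow \<nu> G) z)) =
    int (size A) * (int \<nu> * fls_subdegree (lead_coeff G)) + (\<Sum>z\<in>#A. \<Sum>w\<in>#B. fls_subdegree (z - w))"
proof -
  have nu: "0 < \<nu>" using sG by (rule splits_at_pos)
  have lG: "fls_compose_power (lead_coeff G) \<nu> \<noteq> 0" using G0 nu by (simp add: fls_compose_power_eq_0_iff)
  have "fls_subdegree (poly (subst_pow \<nu> G) z) = int \<nu> * fls_subdegree (lead_coeff G) + (\<Sum>w\<in>#B. fls_subdegree (z - w))"
    if "z \<in># A" for z
  proof -
    have "poly (\<Prod>y\<in>#B. [:- y, 1:]) z \<noteq> 0" "\<forall>w\<in>#B. z \<noteq> w"
      using disjoint that by (auto simp: poly_prod_mset)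
    then show ?thesis using sG lG nu
      by (simp add: splits_at_def fls_subdegree_mult fls_subdegree_compose_power fls_subdegree_poly_prod_linear)
  qed
  then have "(\<Sum>z\<in>#A. fls_subdegree (poly (subst_pow \<nu> G) z)) =
      (\<Sum>z\<in>#A. int \<nu> * fls_subdegree (lead_coeff G) + (\<Sum>w\<in>#B. fls_subdegree (z - w)))"
    by (intro arg_cong[where f = sum_mset] image_mset_cong)
  then show ?thesis by (simp add: sum_mset.distrib sum_mset_constant)
qed

text \<open>Both sides equal \<open>\<Sum>\<^sub>z\<^sub>,\<^sub>w ord(z - w)\<close> over pairs of roots, up to the leading coefficients.\<close>
lemma intm_commute:
  fixes H G :: "'a::field_char_0 fls poly"
  assumes ac: "algebraically_closed TYPE('a)" and H0: "H \<noteq> 0" and G0: "G \<noteq> 0"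
    and sH: "splits_at \<nu> H A" and sG: "splits_at \<nu> G B"
    and nz: "\<forall>z\<in>#A. poly (subst_pow \<nu> G) z \<noteq> 0"
  shows "intm H G = intm G H"
proof -
  have nu: "0 < \<nu>" using sH by (rule splits_at_pos)
  have disjoint: "\<forall>z\<in>#A. z \<notin># B" using nz splits_at_root[OF sG] by blast
  then have nz2: "\<forall>w\<in>#B. poly (subst_pow \<nu> H) w \<noteq> 0"
    using poly_subst_pow_splits_nonzero[OF sH H0] by blast
  have "(\<Sum>w\<in>#B. \<Sum>z\<in>#A. fls_subdegree (w - z)) = (\<Sum>z\<in>#A. \<Sum>w\<in>#B. fls_subdegree (z - w))"
    by (subst sum_mset.swap) (simp add: fls_subdegree_minus_sym)
  moreover have "\<forall>w\<in>#B. w \<notin># A" using disjoint by blast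
  ultimately show ?thesis
    using nu disjoint sum_subdegree_poly_subst_pow[OF sG G0, of A] sum_subdegree_poly_subst_pow[OF sH H0, of B]
      splits_at_size[OF sH H0] splits_at_size[OF sG G0]
    by (simp add: intm_eq_finite[OF ac H0 G0 sH nz] intm_eq_finite[OF ac G0 H0 sG nz2] field_simps)
qed

subsection \<open>Conjugate roots\<close>

lemma fls_subdegree_prod_mset:
  assumes "\<forall>x\<in>#A. (g x :: 'a::field fls) \<noteq> 0"
  shows "fls_subdegree (\<Prod>x\<in>#A. g x) = (\<Sum>x\<in>#A. fls_subdegree (g x))"
  using assms
proof (induction A)
  case (add x A)
  have "(\<Prod>x\<in>#A. g x) \<noteq> 0" "g x \<noteq> 0" using add.prems by (auto simp: prod_mset_zero_iff)
  then show ?case using add by (simp add: fls_subdegree_mult)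
qed simp

lemma poly_rescale:
  assumes "\<zeta> \<noteq> 0"
  shows "poly (map_poly (fls_rescale \<zeta>) p) (fls_rescale \<zeta> x) = fls_rescale \<zeta> (poly p x)"
  by (rule idom_hom.poly_map_poly_hom[OF idom_hom_fls_rescale[OF assms]])

lemma splits_at_rescale_roots:
  fixes H :: "'a::field fls poly"
  assumes s: "splits_at \<nu> H A" and H0: "H \<noteq> 0" and u: "\<zeta> ^ \<nu> = 1"
  shows "image_mset (fls_rescale \<zeta>) A = A"
proof -
  have nu: "0 < \<nu>" using s by (rule splits_at_pos)
  interpret rescale: idom_hom "fls_rescale \<zeta>"
    by (rule idom_hom_fls_rescale[OF root_of_unity_nonzero[OF u nu]])
  have "subst_pow \<nu> H = map_poly (fls_rescale \<zeta>) (subst_pow \<nu> H)"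
    using map_poly_rescale_subst_pow[OF u nu] by simp
  also have "\<dots> = smult (fls_compose_power (lead_coeff H) \<nu>) (\<Prod>x\<in>#image_mset (fls_rescale \<zeta>) A. [:- x, 1:])"
    using s unfolding splits_at_def
    by (simp add: rescale.map_poly_smult rescale.map_poly_prod_mset rescale.map_poly_linear
        fls_rescale_compose_power[OF u nu] image_mset.compositionality o_def)
  finally have "smult (fls_compose_power (lead_coeff H) \<nu>) (\<Prod>x\<in>#A. [:- x, 1:]) =
      smult (fls_compose_power (lead_coeff H) \<nu>) (\<Prod>x\<in>#image_mset (fls_rescale \<zeta>) A. [:- x, 1:])"
    using s unfolding splits_at_def by simp
  moreover have "fls_compose_power (lead_coeff H) \<nu> \<noteq> 0" using H0 nu by (simp add: fls_compose_power_eq_0_iff)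
  ultimately show ?thesis by (metis smult_prod_linear_eqD)
qed

text \<open>The product of \<open>G(X\<^sup>\<nu>, z)\<close> over all roots \<open>z\<close> of \<open>H(X\<^sup>\<nu>, Y)\<close> is invariant under
  \<open>X \<mapsto> \<zeta> X\<close> for \<open>\<zeta>\<^sup>\<nu> = 1\<close>, hence a series in \<open>X\<^sup>\<nu>\<close>.\<close>
lemma dvd_sum_subdegree_roots:
  fixes H G :: "'a::field_char_0 fls poly"
  assumes ac: "algebraically_closed TYPE('a)" and s: "splits_at \<nu> H A" and H0: "H \<noteq> 0"
    and nz: "\<forall>z\<in>#A. poly (subst_pow \<nu> G) z \<noteq> 0"
  shows "int \<nu> dvd (\<Sum>z\<in>#A. fls_subdegree (poly (subst_pow \<nu> G) z))"
proof -
  have nu: "0 < \<nu>" using s by (rule splits_at_pos)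
  define prod_vals where "prod_vals = (\<Prod>z\<in>#A. poly (subst_pow \<nu> G) z)"
  have "fls_rescale \<zeta> prod_vals = prod_vals" if u: "\<zeta> ^ \<nu> = 1" for \<zeta>
  proof -
    have z: "\<zeta> \<noteq> 0" using u nu by (rule root_of_unity_nonzero)
    interpret rescale: idom_hom "fls_rescale \<zeta>" by (rule idom_hom_fls_rescale[OF z])
    have "fls_rescale \<zeta> prod_vals = (\<Prod>z\<in>#A. poly (subst_pow \<nu> G) (fls_rescale \<zeta> z))"
      unfolding prod_vals_def rescale.hom_prod_mset
      using poly_rescale[OF z, of "subst_pow \<nu> G"] map_poly_rescale_subst_pow[OF u nu, of G] by simp
    also have "\<dots> = (\<Prod>z\<in>#image_mset (fls_rescale \<zeta>) A. poly (subst_pow \<nu> G) z)"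
      by (simp add: image_mset.compositionality o_def)
    finally show ?thesis using splits_at_rescale_roots[OF s H0 u] by (simp add: prod_vals_def)
  qed
  then have "int \<nu> dvd fls_subdegree prod_vals" by (rule rescale_invariant_imp_dvd_subdegree[OF ac nu])
  moreover have "fls_subdegree prod_vals = (\<Sum>z\<in>#A. fls_subdegree (poly (subst_pow \<nu> G) z))"
    unfolding prod_vals_def using nz by (rule fls_subdegree_prod_mset)
  ultimately show ?thesis by simp
qed

lemma bij_betw_mult_roots_of_unity:
  assumes "\<xi> ^ \<nu> = (1::'a::field)" "0 < \<nu>"
  shows "bij_betw ((*) \<xi>) {\<zeta>. \<zeta> ^ \<nu> = 1} {\<zeta>. \<zeta> ^ \<nu> = 1}"
proof (rule bij_betw_imageI)
  have \<xi>0: "\<xi> \<noteq> 0" using assms by (rule root_of_unity_nonzero)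
  show "inj_on ((*) \<xi>) {\<zeta>. \<zeta> ^ \<nu> = 1}" using \<xi>0 by (auto intro: inj_onI)
  show "(*) \<xi> ` {\<zeta>. \<zeta> ^ \<nu> = 1} = {\<zeta>. \<zeta> ^ \<nu> = 1}"
  proof
    show "(*) \<xi> ` {\<zeta>. \<zeta> ^ \<nu> = 1} \<subseteq> {\<zeta>. \<zeta> ^ \<nu> = 1}" using assms by (auto simp: power_mult_distrib)
    show "{\<zeta>. \<zeta> ^ \<nu> = 1} \<subseteq> (*) \<xi> ` {\<zeta>. \<zeta> ^ \<nu> = 1}"
    proof
      fix \<zeta> :: 'a assume "\<zeta> \<in> {\<zeta>. \<zeta> ^ \<nu> = 1}"
      then have "inverse \<xi> * \<zeta> \<in> {\<zeta>. \<zeta> ^ \<nu> = 1}" using assms by (simp add: power_mult_distrib power_inverse)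
      moreover have "\<zeta> = \<xi> * (inverse \<xi> * \<zeta>)" using \<xi>0 by simp
      ultimately show "\<zeta> \<in> (*) \<xi> ` {\<zeta>. \<zeta> ^ \<nu> = 1}" by blast
    qed
  qed
qed

lemma map_poly_rescale_prod_orbit:
  assumes "\<xi> ^ \<nu> = (1::'a::field)" "0 < \<nu>"
  shows "map_poly (fls_rescale \<xi>) (\<Prod>\<zeta>\<in>{\<zeta>. \<zeta> ^ \<nu> = 1}. [:- fls_rescale \<zeta> z, 1:]) =
    (\<Prod>\<zeta>\<in>{\<zeta>. \<zeta> ^ \<nu> = 1}. [:- fls_rescale \<zeta> z, 1:])"
proof -
  have \<xi>0: "\<xi> \<noteq> 0" using assms by (rule root_of_unity_nonzero)
  interpret rescale: idom_hom "fls_rescale \<xi>" by (rule idom_hom_fls_rescale[OF \<xi>0])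
  have "map_poly (fls_rescale \<xi>) (\<Prod>\<zeta>\<in>{\<zeta>. \<zeta> ^ \<nu> = 1}. [:- fls_rescale \<zeta> z, 1:]) =
      (\<Prod>\<zeta>\<in>{\<zeta>. \<zeta> ^ \<nu> = 1}. [:- fls_rescale (\<xi> * \<zeta>) z, 1:])"
    unfolding rescale.map_poly_prod rescale.map_poly_linear using \<xi>0 assms(2)
    by (intro prod.cong) (auto simp: fls_rescale_rescale dest: root_of_unity_nonzero)
  also have "\<dots> = (\<Prod>\<zeta>\<in>{\<zeta>. \<zeta> ^ \<nu> = 1}. [:- fls_rescale \<zeta> z, 1:])"
    by (rule prod.reindex_bij_betw[OF bij_betw_mult_roots_of_unity[OF assms]])
  finally show ?thesis .
qed

lemma rescale_invariant_poly_descends: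
  fixes Q :: "'a::field_char_0 fls poly"
  assumes ac: "algebraically_closed TYPE('a)" and nu: "0 < \<nu>"
    and inv: "\<And>\<xi>. \<xi> ^ \<nu> = 1 \<Longrightarrow> map_poly (fls_rescale \<xi>) Q = Q"
  shows "subst_pow \<nu> (map_poly (fls_uncompose_power \<nu>) Q) = Q"
proof (rule poly_eqI)
  fix i
  have "fls_compose_power (fls_uncompose_power \<nu> (coeff Q i)) \<nu> = coeff Q i"
  proof (rule rescale_invariant_imp_compose_power[OF ac nu])
    fix \<xi> :: 'a assume \<xi>: "\<xi> ^ \<nu> = 1"
    show "fls_rescale \<xi> (coeff Q i) = coeff Q i"
      using arg_cong[OF inv[OF \<xi>], of "\<lambda>p. coeff p i"] root_of_unity_nonzero[OF \<xi> nu]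
      by (simp add: coeff_map_poly fls_rescale_eq_0_iff)
  qed
  then show "coeff (subst_pow \<nu> (map_poly (fls_uncompose_power \<nu>) Q)) i = coeff Q i"
    using nu by (simp add: coeff_subst_pow coeff_map_poly)
qed

text \<open>The roots of \<open>P(X\<^sup>\<nu>, Y)\<close> for irreducible \<open>P\<close> are conjugate under \<open>X \<mapsto> \<zeta> X\<close>: the
  polynomial \<open>\<Prod>\<^sub>\<zeta> (Y - z(\<zeta> X))\<close> is defined over \<open>k((X))\<close> after resubstitution, and shares
  the root \<open>z\<close> with \<open>P\<close>, so \<open>P\<close> divides it.\<close>
lemma conjugate_roots:
  fixes P :: "'a::field_char_0 fls poly"
  assumes ac: "algebraically_closed TYPE('a)" and irr: "irreducible P" and s: "splits_at \<nu> P A"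
    and z: "z \<in># A" and z': "z' \<in># A"
  obtains \<zeta> where "\<zeta> ^ \<nu> = 1" "z' = fls_rescale \<zeta> z"
proof -
  have nu: "0 < \<nu>" using s by (rule splits_at_pos)
  define Q where "Q = (\<Prod>\<zeta>\<in>{\<zeta>::'a. \<zeta> ^ \<nu> = 1}. [:- fls_rescale \<zeta> z, 1:])"
  define Q0 where "Q0 = map_poly (fls_uncompose_power \<nu>) Q"
  have Q0_Q: "subst_pow \<nu> Q0 = Q"
    unfolding Q0_def Q_def
    by (rule rescale_invariant_poly_descends[OF ac nu]) (rule map_poly_rescale_prod_orbit[OF _ nu])
  have finite: "finite {\<zeta>::'a. \<zeta> ^ \<nu> = 1}" by (rule finite_roots_of_unity[OF nu])
  have Qz: "poly Q z = 0"
    unfolding Q_def using finite by (auto simp: poly_prod intro!: exI[of _ 1])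
  have "P dvd Q0"
  proof (rule ccontr)
    assume "\<not> P dvd Q0"
    then obtain s t where "s * P + t * Q0 = 1" using irreducible_bezout_one[OF irr] by blast
    then have "subst_pow \<nu> s * subst_pow \<nu> P + subst_pow \<nu> t * Q = 1"
      using nu by (metis subst_pow_add subst_pow_mult subst_pow_one Q0_Q)
    then have "poly (subst_pow \<nu> s * subst_pow \<nu> P + subst_pow \<nu> t * Q) z = 1" by simp
    then show False using splits_at_root[OF s z] Qz by simp
  qed
  then have "subst_pow \<nu> P dvd Q" using subst_pow_dvd[OF nu] Q0_Q by metis
  then have "poly Q z' = 0" using splits_at_root[OF s z'] by (metis dvdE mult_zero_left poly_mult)
  then show ?thesis using that finite by (auto simp: Q_def poly_prod)
qed

subsection \<open>The derivative identity\<close>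

lemma fls_deriv_poly:
  "fls_deriv (poly p w) = poly (map_poly fls_deriv p) w + poly (pderiv p) w * fls_deriv (w :: 'a::field fls)"
  by (induction p) (simp_all add: map_poly_pCons pderiv_pCons algebra_simps)

lemma fls_deriv_compose_power:
  fixes c :: "'a::field_char_0 fls"
  assumes nu: "0 < \<nu>"
  shows "fls_deriv (fls_compose_power c \<nu>) =
     fls_const (of_nat \<nu>) * fls_shift (1 - int \<nu>) (fls_compose_power (fls_deriv c) \<nu>)"
proof (rule fls_eqI)
  fix n :: int
  have dvd_iff: "int \<nu> dvd n + (1 - int \<nu>) \<longleftrightarrow> int \<nu> dvd n + 1"
    by (metis add_diff_eq dvd_diff dvd_refl diff_add_cancel dvd_add)
  show "fls_deriv (fls_compose_power c \<nu>) $$ n =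
     (fls_const (of_nat \<nu>) * fls_shift (1 - int \<nu>) (fls_compose_power (fls_deriv c) \<nu>)) $$ n"
  proof (cases "int \<nu> dvd n + 1")
    case True
    then obtain m where m: "n + 1 = int \<nu> * m" by (elim dvdE)
    have a: "(n + 1) div int \<nu> = m" using nu m by simp
    have "n + (1 - int \<nu>) = int \<nu> * (m - 1)" using m by (simp add: algebra_simps)
    then have b: "(n + (1 - int \<nu>)) div int \<nu> = m - 1" using nu by simp
    have "of_int (n + 1) = (of_nat \<nu> * of_int m :: 'a)" using m by (metis of_int_mult of_int_of_nat_eq)
    then show ?thesis using nu True dvd_iff by (simp add: fls_nth_compose_power a b)
  next
    case False
    then show ?thesis using nu dvd_iff by (simp add: fls_nth_compose_power)
  qed
qed

lemma map_poly_deriv_subst_pow: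
  fixes F :: "'a::field_char_0 fls poly"
  assumes nu: "0 < \<nu>"
  shows "map_poly fls_deriv (subst_pow \<nu> F) =
     smult (fls_const (of_nat \<nu>) * fls_shift (1 - int \<nu>) 1) (subst_pow \<nu> (map_poly fls_deriv F))"
  by (rule poly_eqI)
    (simp add: coeff_map_poly coeff_subst_pow nu fls_deriv_compose_power fls_shifted_times_simps mult_ac)

lemma fls_subdegree_deriv_nonconst:
  fixes g :: "'a::field_char_0 fls"
  assumes "g \<noteq> fls_const (g $$ 0)"
  shows "fls_subdegree (fls_deriv g) = fls_subdegree (g - fls_const (g $$ 0)) - 1"
proof -
  define g' where "g' = g - fls_const (g $$ 0)"
  have g'0: "g' \<noteq> 0" and "g' $$ 0 = 0" using assms by (simp_all add: g'_def)
  then have "fls_subdegree g' \<noteq> 0" using nth_fls_subdegree_nonzero[OF g'0] by metis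
  then have "fls_subdegree (fls_deriv g') = fls_subdegree g' - 1" by (rule fls_subdegree_deriv)
  then show ?thesis by (simp add: g'_def)
qed

lemma sum_mset_Union_image:
  "(\<Sum>x\<in>#(\<Sum>P\<in>#Ps. R P). g x) = (\<Sum>P\<in>#Ps. \<Sum>x\<in>#R P. (g x :: 'b::comm_monoid_add))"
  by (induction Ps) simp_all

lemma prod_mset_Union_image:
  "(\<Prod>x\<in>#(\<Sum>P\<in>#Ps. R P). g x) = (\<Prod>P\<in>#Ps. \<Prod>x\<in>#R P. (g x :: 'b::comm_monoid_mult))"
  by (induction Ps) simp_all

lemma sum_mset_if_eq_filter:
  "(\<Sum>P\<in>#M. if Q P then g P else (0::'b::comm_monoid_add)) = (\<Sum>P\<in>#filter_mset Q M. g P)"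
  by (induction M) simp_all

lemma sum_mset_constant_on:
  assumes "\<And>z. z \<in># R \<Longrightarrow> g z = c"
  shows "(\<Sum>z\<in>#R. g z) = of_nat (size R) * (c :: 'b::semiring_1)"
proof -
  have "(\<Sum>z\<in>#R. g z) = (\<Sum>z\<in>#R. c)" using assms by (metis image_mset_cong)
  then show ?thesis by (simp add: sum_mset_constant)
qed

lemma sum_mset_diff_const:
  "(\<Sum>x\<in>#A. g x - c) = (\<Sum>x\<in>#A. g x) - of_nat (size A) * (c :: 'b::ring_1)"
  by (induction A) (simp_all add: algebra_simps)

lemma ereal_sum_mset_divide:
  "(\<Sum>P\<in>#M. ereal (real_of_int (g P) / r)) = ereal (real_of_int (\<Sum>P\<in>#M. g P) / r)"
  by (induction M) (simp_all add: add_divide_distrib)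

lemma sum_filter_mset_by_key:
  fixes key :: "'c \<Rightarrow> 'b option" and \<phi> :: "'c \<Rightarrow> ereal"
  assumes "finite S"
  shows "(\<Sum>l\<in>S. \<Sum>P\<in>#filter_mset (\<lambda>P. key P = Some l) M. \<phi> P) =
         (\<Sum>P\<in>#filter_mset (\<lambda>P. \<exists>l\<in>S. key P = Some l) M. \<phi> P)"
proof (induction M)
  case (add x M)
  show ?case
  proof (cases "\<exists>l\<in>S. key x = Some l")
    case True
    then obtain l0 where l0: "l0 \<in> S" "key x = Some l0" by blast
    have "(\<Sum>l\<in>S. \<Sum>P\<in>#filter_mset (\<lambda>P. key P = Some l) (add_mset x M). \<phi> P) =
          (\<Sum>l\<in>S. (if l = l0 then \<phi> x else 0) + (\<Sum>P\<in>#filter_mset (\<lambda>P. key P = Some l) M. \<phi> P))"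
      by (rule sum.cong) (auto simp: l0)
    also have "\<dots> = \<phi> x + (\<Sum>l\<in>S. \<Sum>P\<in>#filter_mset (\<lambda>P. key P = Some l) M. \<phi> P)"
      using assms l0 by (simp add: sum.distrib)
    finally show ?thesis using add True by simp
  next
    case False
    then show ?thesis using add by simp
  qed
qed simp

lemma fls_subdegree_minus_const_pos_iff:
  fixes g :: "'a::field fls"
  assumes "0 \<le> fls_subdegree g" "g \<noteq> fls_const l"
  shows "0 < fls_subdegree (g - fls_const l) \<longleftrightarrow> l = g $$ 0"
proof
  assume "0 < fls_subdegree (g - fls_const l)"
  then have "(g - fls_const l) $$ 0 = 0" by (intro fls_eq0_below_subdegree) simp
  then show "l = g $$ 0" by simp
next
  assume l: "l = g $$ 0"
  have "1 \<le> fls_subdegree (g - fls_const l)"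
  proof (rule fls_subdegree_geI)
    show "g - fls_const l \<noteq> 0" using assms(2) by simp
    fix k :: int assume "k < 1"
    then show "(g - fls_const l) $$ k = 0"
      using assms(1) l by (cases "k = 0") (simp_all add: fls_eq0_below_subdegree)
  qed
  then show "0 < fls_subdegree (g - fls_const l)" by simp
qed

lemma fls_subdegree_minus_nth_0:
  fixes g :: "'a::field fls"
  assumes "g \<noteq> 0" "fls_subdegree g \<noteq> 0" "g \<noteq> fls_const (g $$ 0)"
  shows "fls_subdegree (g - fls_const (g $$ 0)) = fls_subdegree g"
proof (cases "0 < fls_subdegree g")
  case True
  then have "g $$ 0 = 0" by (intro fls_eq0_below_subdegree) simp
  then show ?thesis by simp
next
  case False
  then have neg: "fls_subdegree g < 0" using assms(2) by simp
  show ?thesis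
  proof (rule fls_subdegree_eqI)
    show "(g - fls_const (g $$ 0)) $$ fls_subdegree g \<noteq> 0" using neg assms(1) by simp
    fix k assume "k < fls_subdegree g"
    then show "(g - fls_const (g $$ 0)) $$ k = 0" using neg by (simp add: fls_eq0_below_subdegree)
  qed
qed

lemma finite_alpha: "finite (alpha H G)"
proof -
  have "alpha H G \<subseteq> (\<lambda>P. the (res P G)) ` set_mset (factors H)"
    by (force simp: alpha_def alpha_lam_def)
  then show ?thesis by (rule finite_subset) simp
qed

lemma beta_eq_sum_factors:
  "beta H G = (\<Sum>P\<in>#filter_mset (\<lambda>P. res P G \<notin> {None, Some 0}) (factors H).
     intm P (G - [:fls_const (the (res P G)):]))"
proof -
  define \<psi> where "\<psi> P = intm P (G - [:fls_const (the (res P G)):])" for P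
  have "beta_lam l H G = (\<Sum>P\<in>#filter_mset (\<lambda>P. res P G = Some l) (factors H). \<psi> P)" for l
    unfolding beta_lam_def alpha_lam_def \<psi>_def by (intro arg_cong[where f = sum_mset] image_mset_cong) auto
  then have "beta H G = (\<Sum>l\<in>alpha H G - {0}. \<Sum>P\<in>#filter_mset (\<lambda>P. res P G = Some l) (factors H). \<psi> P)"
    by (simp add: beta_def)
  also have "\<dots> = (\<Sum>P\<in>#filter_mset (\<lambda>P. \<exists>l\<in>alpha H G - {0}. res P G = Some l) (factors H). \<psi> P)"
    by (rule sum_filter_mset_by_key) (simp add: finite_alpha)
  also have "filter_mset (\<lambda>P. \<exists>l\<in>alpha H G - {0}. res P G = Some l) (factors H) =
      filter_mset (\<lambda>P. res P G \<notin> {None, Some 0}) (factors H)"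
    by (intro filter_mset_cong) (auto simp: alpha_def alpha_lam_def filter_empty_mset)
  finally show ?thesis by (simp add: \<psi>_def)
qed

lemma factors_spec:
  assumes "H \<noteq> 0"
  shows "(\<forall>P\<in>#factors H. monic_irred P) \<and> H = smult (lead_coeff H) (prod_mset (factors H))"
  unfolding factors_def by (rule someI_ex[OF monic_irred_factorization[OF assms]])

locale betabar_setting =
  fixes F :: "'a::field_char_0 fls poly" and c0 :: 'a and \<nu> :: nat
  assumes ac: "algebraically_closed TYPE('a)"
    and lead_F: "lead_coeff F = fls_const c0"
    and deg_pos: "0 < degree F"
    and gcd_one: "\<And>c. intm (pderiv F) (F - [:fls_const c:]) \<noteq> \<infinity>"
    and splits_factor: "\<And>P. P \<in># factors (pderiv F) \<Longrightarrow> \<exists>A. splits_at \<nu> P A"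
    and splits_F: "\<exists>A. splits_at \<nu> F A"
    and splits_FX: "map_poly fls_deriv F \<noteq> 0 \<Longrightarrow> \<exists>A. splits_at \<nu> (map_poly fls_deriv F) A"
begin

abbreviation FY where "FY \<equiv> pderiv F"
abbreviation FX where "FX \<equiv> map_poly fls_deriv F"
abbreviation val where "val G w \<equiv> poly (subst_pow \<nu> G) w"

definition roots_of :: "'a fls poly \<Rightarrow> 'a fls multiset" where
  "roots_of P = (SOME A. splits_at \<nu> P A)"

definition FY_roots :: "'a fls multiset" where
  "FY_roots = (\<Sum>P\<in>#factors FY. roots_of P)"

definition ord_F :: "'a fls \<Rightarrow> int" where
  "ord_F w = fls_subdegree (val F w)"

text \<open>If \<open>ord_F w \<ge> 0\<close>, the constant term of \<open>F(X\<^sup>\<nu>, w)\<close> is \<open>res P F\<close> for the factor \<open>P\<close> of \<open>F\<^sub>Y\<close>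
  vanishing at \<open>w\<close>.\<close>
definition ord_F_minus_res :: "'a fls \<Rightarrow> int" where
  "ord_F_minus_res w = fls_subdegree (val F w - fls_const (val F w $$ 0))"

lemma nu_pos: "0 < \<nu>"
  using splits_F splits_at_pos by blast

lemma F_nonzero: "F \<noteq> 0"
  using deg_pos by auto

lemma FY_nonzero: "FY \<noteq> 0"
  using deg_pos by (simp add: pderiv_eq_0_iff)

lemma F_minus_const_nonzero: "F - [:fls_const c:] \<noteq> 0"
  using deg_pos by auto

lemma degree_FY: "degree FY = degree F - 1"
  by (simp add: degree_pderiv)

lemma subdegree_lead_coeff_FY: "fls_subdegree (lead_coeff FY) = 0"
proof -
  have "lead_coeff FY = of_nat (Suc (degree F - 1)) * coeff F (Suc (degree F - 1))"
    by (simp add: degree_FY coeff_pderiv)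
  also have "Suc (degree F - 1) = degree F" using deg_pos by simp
  finally show ?thesis using lead_F by (simp add: fls_of_nat)
qed

lemma factor_FY: "P \<in># factors FY \<Longrightarrow> monic_irred P"
  using factors_spec[OF FY_nonzero] by blast

lemma factor_FY_nonzero: "P \<in># factors FY \<Longrightarrow> P \<noteq> 0"
  using factor_FY[of P] by (auto simp: monic_irred_def)

lemma splits_roots_of: "P \<in># factors FY \<Longrightarrow> splits_at \<nu> P (roots_of P)"
  unfolding roots_of_def using splits_factor by (rule someI_ex)

lemma size_roots_of: "P \<in># factors FY \<Longrightarrow> size (roots_of P) = degree P"
  using splits_at_size[OF splits_roots_of factor_FY_nonzero] .

lemma in_FY_roots: "P \<in># factors FY \<Longrightarrow> z \<in># roots_of P \<Longrightarrow> z \<in># FY_roots"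
  by (auto simp: FY_roots_def in_Union_mset_iff)

lemma splits_FY: "splits_at \<nu> FY FY_roots"
proof -
  have "subst_pow \<nu> FY = smult (fls_compose_power (lead_coeff FY) \<nu>) (subst_pow \<nu> (prod_mset (factors FY)))"
    using factors_spec[OF FY_nonzero] nu_pos by (metis subst_pow_smult)
  also have "subst_pow \<nu> (prod_mset (factors FY)) = (\<Prod>P\<in>#factors FY. \<Prod>x\<in>#roots_of P. [:- x, 1:])"
    using nu_pos splits_roots_of factor_FY
    by (auto simp: subst_pow_prod_mset[where g = "\<lambda>x. x", simplified] splits_at_def monic_irred_def
        intro!: arg_cong[where f = prod_mset] image_mset_cong)
  finally show ?thesis
    using nu_pos by (simp add: splits_at_def FY_roots_def prod_mset_Union_image)
qed

lemma size_FY_roots: "size FY_roots = degree F - 1"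
  using splits_at_size[OF splits_FY FY_nonzero] degree_FY by simp

text \<open>The hypothesis \<open>GCD(F\<^sub>Y, F - c) = 1\<close> says that \<open>F\<close> is nowhere constant on the roots of \<open>F\<^sub>Y\<close>.\<close>
lemma val_F_nonconst: "w \<in># FY_roots \<Longrightarrow> val F w \<noteq> fls_const c"
proof
  assume w: "w \<in># FY_roots" and "val F w = fls_const c"
  then have "val (F - [:fls_const c:]) w = 0"
    using nu_pos by (simp add: subst_pow_diff subst_pow_const)
  then have "intm_value \<nu> FY_roots FY (F - [:fls_const c:]) = \<infinity>"
    using w nu_pos FY_nonzero by (intro intm_value_infinite) auto
  then show False
    using gcd_one intm_eq_intm_value[OF ac FY_nonzero F_minus_const_nonzero splits_FY] by simp
qed

lemma val_F_nonzero: "w \<in># FY_roots \<Longrightarrow> val F w \<noteq> 0"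
  using val_F_nonconst[of w 0] by simp

text \<open>Chain rule: \<open>d/dX F(X\<^sup>\<nu>, w) = \<nu> X\<^sup>\<nu>\<^sup>-\<^sup>1 F\<^sub>X(X\<^sup>\<nu>, w)\<close> as \<open>F\<^sub>Y(X\<^sup>\<nu>, w) = 0\<close>.\<close>
lemma fls_deriv_val_F:
  assumes "w \<in># FY_roots"
  shows "fls_deriv (val F w) = (fls_const (of_nat \<nu>) * fls_shift (1 - int \<nu>) 1) * val FX w"
proof -
  have "fls_deriv (val F w) = poly (map_poly fls_deriv (subst_pow \<nu> F)) w + val FY w * fls_deriv w"
    using nu_pos by (simp add: fls_deriv_poly subst_pow_pderiv)
  also have "val FY w = 0" by (rule splits_at_root[OF splits_FY assms])
  finally show ?thesis by (simp add: map_poly_deriv_subst_pow[OF nu_pos])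
qed

lemma val_FX:
  assumes w: "w \<in># FY_roots"
  shows "val FX w \<noteq> 0 \<and> fls_subdegree (val FX w) = ord_F_minus_res w - int \<nu>"
proof -
  define K :: "'a fls" where "K = fls_const (of_nat \<nu>) * fls_shift (1 - int \<nu>) 1"
  have K0: "K \<noteq> 0" and sdK: "fls_subdegree K = int \<nu> - 1"
    using nu_pos by (simp_all add: K_def fls_shift_eq0_iff fls_subdegree_mult)
  have nc: "val F w \<noteq> fls_const (val F w $$ 0)" by (rule val_F_nonconst[OF w])
  then have "fls_deriv (val F w) \<noteq> 0" by (simp add: fls_deriv_eq_0_iff)
  then have fx0: "val FX w \<noteq> 0" using fls_deriv_val_F[OF w] by (auto simp: K_def)
  have "fls_subdegree (fls_deriv (val F w)) = ord_F_minus_res w - 1"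
    unfolding ord_F_minus_res_def by (rule fls_subdegree_deriv_nonconst[OF nc])
  moreover have "fls_subdegree (fls_deriv (val F w)) = fls_subdegree K + fls_subdegree (val FX w)"
    using fls_deriv_val_F[OF w] K0 fx0 by (simp add: K_def fls_subdegree_mult)
  ultimately show ?thesis using fx0 sdK by simp
qed

lemma FX_nonzero: "FX \<noteq> 0 \<or> FY_roots = {#}"
proof (cases "FY_roots = {#}")
  case False
  then obtain w where "w \<in># FY_roots" by blast
  then show ?thesis using val_FX[of w] by auto
qed simp

definition sum_ord_F :: int where
  "sum_ord_F = (\<Sum>w\<in>#FY_roots. ord_F w)"

definition sum_ord_FX :: int where
  "sum_ord_FX = (\<Sum>w\<in>#FY_roots. fls_subdegree (val FX w))"

text \<open>The roots of \<open>F\<^sub>Y\<close> at which \<open>F\<close> has a nonzero residue are those with \<open>ord_F w = 0\<close>.\<close>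
definition sum_ord_residual :: int where
  "sum_ord_residual = (\<Sum>w\<in>#FY_roots. if ord_F w = 0 then ord_F_minus_res w else 0)"

lemma sum_ord_FX_eq: "sum_ord_FX = sum_ord_F + sum_ord_residual - int \<nu> * (int (degree F) - 1)"
proof -
  have "ord_F_minus_res w = ord_F w + (if ord_F w = 0 then ord_F_minus_res w else 0)"
    if w: "w \<in># FY_roots" for w
    using fls_subdegree_minus_nth_0[OF val_F_nonzero[OF w] _ val_F_nonconst[OF w]]
    by (auto simp: ord_F_minus_res_def ord_F_def)
  then have "sum_ord_FX = (\<Sum>w\<in>#FY_roots. ord_F w + (if ord_F w = 0 then ord_F_minus_res w else 0) - int \<nu>)"
    unfolding sum_ord_FX_def using val_FX by (metis (no_types, lifting) image_mset_cong)
  also have "\<dots> = sum_ord_F + sum_ord_residual - int (size FY_roots) * int \<nu>"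
    by (simp add: sum_ord_F_def sum_ord_residual_def sum_mset.distrib sum_mset_diff_const)
  finally show ?thesis using size_FY_roots deg_pos by (simp add: of_nat_diff mult.commute)
qed

lemma intm_F_FY: "intm F FY = ereal (real_of_int sum_ord_F / real \<nu>)"
proof -
  have nz: "\<forall>z\<in>#FY_roots. val F z \<noteq> 0" using val_F_nonzero by blast
  obtain A where "splits_at \<nu> F A" using splits_F by blast
  then have "intm FY F = intm F FY" by (rule intm_commute[OF ac FY_nonzero F_nonzero splits_FY _ nz])
  moreover have "intm FY F = ereal (real_of_int sum_ord_F / real \<nu>)"
    using intm_eq_finite[OF ac FY_nonzero F_nonzero splits_FY nz] subdegree_lead_coeff_FY
    by (simp add: sum_ord_F_def ord_F_def)
  ultimately show ?thesis by simp
qed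

lemma intm_FX_FY: "intm FX FY = ereal (real_of_int sum_ord_FX / real \<nu>)"
proof (cases "FX = 0")
  case True
  then have "FY_roots = {#}" using FX_nonzero by simp
  then have "degree FY = 0" using size_FY_roots degree_FY by simp
  then show ?thesis using True \<open>FY_roots = {#}\<close> FY_nonzero by (simp add: intm_def sum_ord_FX_def)
next
  case False
  then obtain A where A: "splits_at \<nu> FX A" using splits_FX by blast
  have nz: "\<forall>z\<in>#FY_roots. val FX z \<noteq> 0" using val_FX by blast
  have "intm FY FX = intm FX FY" by (rule intm_commute[OF ac FY_nonzero False splits_FY A nz])
  moreover have "intm FY FX = ereal (real_of_int sum_ord_FX / real \<nu>)"
    using intm_eq_finite[OF ac FY_nonzero False splits_FY nz] subdegree_lead_coeff_FY
    by (simp add: sum_ord_FX_def)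
  ultimately show ?thesis by simp
qed

lemma dvd_sum_ord_F: "int \<nu> dvd sum_ord_F"
  using dvd_sum_subdegree_roots[OF ac splits_FY FY_nonzero, of F] val_F_nonzero
  by (simp add: sum_ord_F_def ord_F_def)

lemma dvd_sum_ord_FX: "int \<nu> dvd sum_ord_FX"
  using dvd_sum_subdegree_roots[OF ac splits_FY FY_nonzero, of FX] val_FX
  by (simp add: sum_ord_FX_def)

definition rep_root :: "'a fls poly \<Rightarrow> 'a fls" where
  "rep_root P = (SOME z. z \<in># roots_of P)"

lemma rep_root_in: "P \<in># factors FY \<Longrightarrow> rep_root P \<in># roots_of P"
  using size_roots_of[of P] factor_FY[of P] unfolding rep_root_def monic_irred_def
  by (metis (mono_tags) multiset_nonemptyE size_empty some_eq_ex less_irrefl)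

lemma val_F_conjugate:
  assumes P: "P \<in># factors FY" and z: "z \<in># roots_of P"
  obtains \<zeta> where "\<zeta> \<noteq> 0" "val F z = fls_rescale \<zeta> (val F (rep_root P))"
proof -
  obtain \<zeta> where \<zeta>: "\<zeta> ^ \<nu> = 1" "z = fls_rescale \<zeta> (rep_root P)"
    using conjugate_roots[OF ac _ splits_roots_of[OF P] rep_root_in[OF P] z] factor_FY[OF P]
    by (auto simp: monic_irred_def)
  have \<zeta>0: "\<zeta> \<noteq> 0" using \<zeta>(1) nu_pos by (rule root_of_unity_nonzero)
  have "val F z = poly (map_poly (fls_rescale \<zeta>) (subst_pow \<nu> F)) (fls_rescale \<zeta> (rep_root P))"
    using map_poly_rescale_subst_pow[OF \<zeta>(1) nu_pos, of F] by (simp add: \<zeta>(2))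
  also have "\<dots> = fls_rescale \<zeta> (val F (rep_root P))" by (rule poly_rescale[OF \<zeta>0])
  finally show ?thesis using that \<zeta>0 by blast
qed

lemma val_F_conjugate_invariants:
  assumes "P \<in># factors FY" "z \<in># roots_of P"
  shows "val F z $$ 0 = val F (rep_root P) $$ 0"
    and "fls_subdegree (val F z - fls_const l) = fls_subdegree (val F (rep_root P) - fls_const l)"
proof -
  obtain \<zeta> where \<zeta>: "\<zeta> \<noteq> 0" "val F z = fls_rescale \<zeta> (val F (rep_root P))"
    using val_F_conjugate[OF assms] .
  interpret rescale: idom_hom "fls_rescale \<zeta>" by (rule idom_hom_fls_rescale[OF \<zeta>(1)])
  show "val F z $$ 0 = val F (rep_root P) $$ 0" using \<zeta> by (simp add: fls_nth_rescale)
  have "val F z - fls_const l = fls_rescale \<zeta> (val F (rep_root P) - fls_const l)"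
    using \<zeta>(2) by (simp add: rescale.hom_diff)
  then show "fls_subdegree (val F z - fls_const l) = fls_subdegree (val F (rep_root P) - fls_const l)"
    using \<zeta>(1) by (simp add: fls_subdegree_rescale)
qed

lemma ord_F_conjugate:
  assumes "P \<in># factors FY" "z \<in># roots_of P"
  shows "ord_F z = ord_F (rep_root P)" "ord_F_minus_res z = ord_F_minus_res (rep_root P)"
proof -
  show "ord_F z = ord_F (rep_root P)"
    using val_F_conjugate_invariants(2)[OF assms, of 0] by (simp add: ord_F_def)
  show "ord_F_minus_res z = ord_F_minus_res (rep_root P)"
    unfolding ord_F_minus_res_def val_F_conjugate_invariants(1)[OF assms]
    by (rule val_F_conjugate_invariants(2)[OF assms])
qed

lemma intm_factor_F_minus_const:
  assumes P: "P \<in># factors FY"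
  shows "intm P (F - [:fls_const l:]) =
    ereal (real_of_int (int (degree P) * fls_subdegree (val F (rep_root P) - fls_const l)) / real \<nu>)"
proof -
  have val_eq: "val (F - [:fls_const l:]) z = val F z - fls_const l" for z
    using nu_pos by (simp add: subst_pow_diff subst_pow_const)
  have nz: "\<forall>z\<in>#roots_of P. val (F - [:fls_const l:]) z \<noteq> 0"
    using val_F_nonconst in_FY_roots[OF P] by (simp add: val_eq)
  have "(\<Sum>z\<in>#roots_of P. fls_subdegree (val (F - [:fls_const l:]) z)) =
      int (size (roots_of P)) * fls_subdegree (val F (rep_root P) - fls_const l)"
    using val_F_conjugate_invariants(2)[OF P] by (intro sum_mset_constant_on) (simp add: val_eq)
  then show ?thesis
    using intm_eq_finite[OF ac factor_FY_nonzero[OF P] F_minus_const_nonzero splits_roots_of[OF P] nz]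
      factor_FY[OF P] size_roots_of[OF P] by (simp add: monic_irred_def)
qed

lemma res_factor:
  assumes P: "P \<in># factors FY"
  shows "res P F = (if 0 \<le> ord_F (rep_root P) then Some (val F (rep_root P) $$ 0) else None)"
proof -
  have deg: "0 < degree P" using factor_FY[OF P] by (simp add: monic_irred_def)
  have "intm P F = ereal (real_of_int (int (degree P) * ord_F (rep_root P)) / real \<nu>)"
    using intm_factor_F_minus_const[OF P, of 0] by (simp add: ord_F_def)
  then have nonneg: "0 \<le> intm P F \<longleftrightarrow> 0 \<le> ord_F (rep_root P)"
    using deg nu_pos by (simp add: zero_le_divide_iff zero_le_mult_iff)
  have "0 < intm P (F - [:fls_const l:]) \<longleftrightarrow> l = val F (rep_root P) $$ 0"
    if "0 \<le> ord_F (rep_root P)" for l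
  proof -
    have "0 < intm P (F - [:fls_const l:]) \<longleftrightarrow> 0 < fls_subdegree (val F (rep_root P) - fls_const l)"
      using intm_factor_F_minus_const[OF P, of l] deg nu_pos
      by (simp add: zero_less_divide_iff zero_less_mult_iff)
    also have "\<dots> \<longleftrightarrow> l = val F (rep_root P) $$ 0"
      using that val_F_nonconst[OF in_FY_roots[OF P rep_root_in[OF P]]]
      by (intro fls_subdegree_minus_const_pos_iff) (simp_all add: ord_F_def)
    finally show ?thesis .
  qed
  then show ?thesis using nonneg by (auto simp: res_def intro!: the_equality)
qed

lemma res_factor_nonzero_iff:
  assumes P: "P \<in># factors FY"
  shows "res P F \<notin> {None, Some 0} \<longleftrightarrow> ord_F (rep_root P) = 0"
proof -
  define g where "g = val F (rep_root P)"
  have "g \<noteq> 0" using val_F_nonzero in_FY_roots[OF P rep_root_in[OF P]] by (simp add: g_def)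
  then have "g $$ 0 \<noteq> 0 \<longleftrightarrow> fls_subdegree g = 0" if "0 \<le> fls_subdegree g"
    using that nth_fls_subdegree_nonzero[of g] fls_eq0_below_subdegree[of 0 g]
    by (cases "fls_subdegree g = 0") auto
  then show ?thesis by (auto simp: res_factor[OF P] ord_F_def g_def)
qed

lemma betabar_eq_sum_factors:
  "betabar F = ereal (real_of_int (\<Sum>P\<in>#filter_mset (\<lambda>P. ord_F (rep_root P) = 0) (factors FY).
      int (degree P) * ord_F_minus_res (rep_root P)) / real \<nu>)"
proof -
  have "filter_mset (\<lambda>P. res P F \<notin> {None, Some 0}) (factors FY) =
      filter_mset (\<lambda>P. ord_F (rep_root P) = 0) (factors FY)"
    using res_factor_nonzero_iff by (intro filter_mset_cong) simp_all
  then have "betabar F = (\<Sum>P\<in>#filter_mset (\<lambda>P. ord_F (rep_root P) = 0) (factors FY).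
      intm P (F - [:fls_const (the (res P F)):]))"
    by (simp add: betabar_def beta_eq_sum_factors)
  also have "\<dots> = (\<Sum>P\<in>#filter_mset (\<lambda>P. ord_F (rep_root P) = 0) (factors FY).
      ereal (real_of_int (int (degree P) * ord_F_minus_res (rep_root P)) / real \<nu>))"
    by (intro arg_cong[where f = sum_mset] image_mset_cong)
      (auto simp: res_factor intm_factor_F_minus_const ord_F_minus_res_def)
  finally show ?thesis by (simp only: ereal_sum_mset_divide)
qed

lemma sum_ord_residual_eq_sum_factors:
  "sum_ord_residual = (\<Sum>P\<in>#filter_mset (\<lambda>P. ord_F (rep_root P) = 0) (factors FY).
      int (degree P) * ord_F_minus_res (rep_root P))"
proof -
  have "(\<Sum>z\<in>#roots_of P. if ord_F z = 0 then ord_F_minus_res z else 0) =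
      (if ord_F (rep_root P) = 0 then int (degree P) * ord_F_minus_res (rep_root P) else 0)"
    if P: "P \<in># factors FY" for P
  proof -
    have "(\<Sum>z\<in>#roots_of P. if ord_F z = 0 then ord_F_minus_res z else 0) =
        of_nat (size (roots_of P)) * (if ord_F (rep_root P) = 0 then ord_F_minus_res (rep_root P) else 0)"
      by (rule sum_mset_constant_on) (simp add: ord_F_conjugate[OF P])
    then show ?thesis by (simp add: size_roots_of[OF P])
  qed
  then show ?thesis
    unfolding sum_ord_residual_def FY_roots_def sum_mset_Union_image sum_mset_if_eq_filter[symmetric]
    by (intro arg_cong[where f = sum_mset] image_mset_cong) simp
qed

lemma betabar_eq: "betabar F = ereal (real_of_int sum_ord_residual / real \<nu>)"
  by (simp add: betabar_eq_sum_factors sum_ord_residual_eq_sum_factors)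

lemma derivative_identity:
  "\<exists>a b c :: int. intm FX FY = ereal (real_of_int a) \<and> intm F FY = ereal (real_of_int b) \<and>
     betabar F = ereal (real_of_int c) \<and> a = b - int (degree F) + 1 + c"
proof -
  obtain a where a: "sum_ord_FX = int \<nu> * a" using dvd_sum_ord_FX by (elim dvdE)
  obtain b where b: "sum_ord_F = int \<nu> * b" using dvd_sum_ord_F by (elim dvdE)
  have c: "sum_ord_residual = int \<nu> * (a - b + int (degree F) - 1)"
    using sum_ord_FX_eq a b by (simp add: algebra_simps)
  show ?thesis
    using nu_pos by (intro exI[of _ a] exI[of _ b] exI[of _ "a - b + int (degree F) - 1"])
      (simp add: intm_FX_FY intm_F_FY betabar_eq a b c)
qed

end

theorem mainTheorem3:
  fixes F :: "'a::field_char_0 fls poly"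
  assumes alg_closed: "\<forall>p::'a poly. degree p > 0 \<longrightarrow> (\<exists>x. poly p x = 0)"
    and k_monic: "\<exists>c. c \<noteq> 0 \<and> lead_coeff F = fls_const c"
    and deg_pos: "degree F > 0"
    and gcd_one: "\<forall>c::'a. intm (pderiv F) (F - [:fls_const c:]) \<noteq> (\<infinity>::ereal)"
  shows "\<exists>a b c :: int.
           intm (map_poly fls_deriv F) (pderiv F) = ereal (real_of_int a) \<and>
           intm F (pderiv F) = ereal (real_of_int b) \<and>
           betabar F = ereal (real_of_int c) \<and>
           a = b - int (degree F) + 1 + c"
proof -
  have ac: "algebraically_closed TYPE('a)" using alg_closed by (simp add: algebraically_closed_def)
  obtain c0 where "lead_coeff F = fls_const c0" using k_monic by blast
  have "pderiv F \<noteq> 0" using deg_pos by (simp add: pderiv_eq_0_iff)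
  define Ps where
    "Ps = factors (pderiv F) + {#F#} + (if map_poly fls_deriv F = 0 then {#} else {#map_poly fls_deriv F#})"
  have "\<forall>P\<in>#Ps. P \<noteq> 0"
    using factors_spec[OF \<open>pderiv F \<noteq> 0\<close>] deg_pos by (auto simp: Ps_def monic_irred_def)
  then obtain \<nu> where splits: "\<forall>P\<in>#Ps. \<exists>A. splits_at \<nu> P A"
    using common_splitting[OF ac] by blast
  interpret betabar_setting F c0 \<nu>
  proof
    show "\<exists>A. splits_at \<nu> P A" if "P \<in># factors (pderiv F)" for P
      using splits that by (simp add: Ps_def)
    show "\<exists>A. splits_at \<nu> F A" using splits by (simp add: Ps_def)
    show "\<exists>A. splits_at \<nu> (map_poly fls_deriv F) A" if "map_poly fls_deriv F \<noteq> 0"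
      using splits that by (simp add: Ps_def)
  qed (use ac \<open>lead_coeff F = fls_const c0\<close> deg_pos gcd_one in auto)
  show ?thesis by (rule derivative_identity)
qed

end
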